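(* Let $p$ be an odd prime and $d\ge2$. Let $s_n$ denote the number of open subgroups of index at most $n$ in $SL_d(\mathbb Z_p)$. Then there are infinitely many positive integers $n$ with $s_n\ge n^{c}$, where $c=(3-2\sqrt2)d^2-2(2-\sqrt2)$.
   Context: $\mathbb Z_p$ denotes the ring of $p$-adic integers. *)

theory Defs
  imports Complex_Main "HOL-Algebra.Coset" "Jordan_Normal_Form.Determinant"
begin

text \<open>SL_d(Z_p) realised as the inverse limit of the groups SL_d(Z/p^k Z), k = 0,1,2,...\<close>

definition red_mat :: "int \<Rightarrow> int mat \<Rightarrow> int mat" where
  "red_mat q M = map_mat (\<lambda>x. x mod q) M"

definition SL_Zp_carrier :: "nat \<Rightarrow> nat \<Rightarrow> (nat \<Rightarrow> int mat) set" where
  "SL_Zp_carrier p d = {A. \<forall>k.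
       A k \<in> carrier_mat d d
     \<and> (\<forall>i<d. \<forall>j<d. 0 \<le> A k $$ (i,j) \<and> A k $$ (i,j) < int p ^ k)
     \<and> det (A k) mod (int p ^ k) = 1 mod (int p ^ k)
     \<and> red_mat (int p ^ k) (A (Suc k)) = A k}"

definition SL_Zp :: "nat \<Rightarrow> nat \<Rightarrow> (nat \<Rightarrow> int mat) monoid" where
  "SL_Zp p d = \<lparr> partial_object.carrier = SL_Zp_carrier p d,
                 monoid.mult = (\<lambda>A B k. red_mat (int p ^ k) (A k * B k)),
                 monoid.one = (\<lambda>k. red_mat (int p ^ k) (1\<^sub>m d)) \<rparr>"

text \<open>Open subgroups: with the inverse-limit (p-adic) topology, the kernels of the
  reduction maps mod p^k form a neighbourhood basis of the identity, so a subgroup is open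
  iff it contains one of these congruence kernels.\<close>

definition open_subgroup_SL :: "nat \<Rightarrow> nat \<Rightarrow> (nat \<Rightarrow> int mat) set \<Rightarrow> bool" where
  "open_subgroup_SL p d H \<longleftrightarrow> subgroup H (SL_Zp p d) \<and>
     (\<exists>k. {A \<in> carrier (SL_Zp p d). A k = one (SL_Zp p d) k} \<subseteq> H)"

definition num_open_subgroups :: "nat \<Rightarrow> nat \<Rightarrow> nat \<Rightarrow> nat" where
  "num_open_subgroups p d n = card {H. open_subgroup_SL p d H \<and>
      finite (rcosets\<^bsub>SL_Zp p d\<^esub> H) \<and> card (rcosets\<^bsub>SL_Zp p d\<^esub> H) \<le> n}"

end

theory Submission
  imports Defs "HOL-Number_Theory.Cong"
begin

text \<open>Let \<open>K\<^sub>k\<close> be the kernel of reduction modulo \<open>p^k\<close>. An element of \<open>K\<^sub>m\<close> is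
  \<open>1 + p^m X\<close> modulo \<open>p^(2m)\<close>, and \<open>x \<mapsto> X mod p^m\<close> is a homomorphism onto the traceless
  matrices modulo \<open>p^m\<close>, an additive group with \<open>d\<^sup>2 - 1\<close> coordinates. For every
  \<open>(d\<^sup>2 - 1 - a) \<times> a\<close> matrix F modulo \<open>p^m\<close>, the preimage of the graph of F (the last
  \<open>d\<^sup>2 - 1 - a\<close> coordinates are F applied to the first a) is an open subgroup containing
  \<open>K\<^bsub>2m\<^esub>\<close>; its index is at most \<open>p^(m(2d\<^sup>2 - a))\<close>, since every coset meets \<open>p^(ma)\<close> of the
  \<open>p^(2md\<^sup>2)\<close> residue classes modulo \<open>p^(2m)\<close>. Distinct F give distinct subgroups, so
  \<open>s\<^sub>n \<ge> p^(m(d\<^sup>2 - 1 - a)a)\<close> for \<open>n = p^(m(2d\<^sup>2 - a))\<close>, and \<open>a \<approx> (2 - \<surd>2)d\<^sup>2\<close> makes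
  the exponents compare as claimed.

  Since \<open>s\<^sub>n\<close> is a cardinality, the set of open subgroups of index at most n must also be
  shown finite. Such a subgroup contains all \<open>n!\<close>-th powers, and since
  \<open>(1 + p^s Y)^p \<equiv> 1 + p^(s+1) Y\<close> modulo \<open>p^(s+2)\<close> for \<open>s \<ge> 2\<close> and traceless matrices lift to \<open>SL\<^sub>d(\<int>)\<close> to
  first order, these powers fill up \<open>K\<^bsub>e+2\<^esub>\<close> where \<open>p^e\<close> exactly divides \<open>n!\<close>. Neither
  step uses that p is odd.\<close>

section \<open>Integer matrices modulo q\<close>

lemma dim_red_mat [simp]: "dim_row (red_mat q A) = dim_row A" "dim_col (red_mat q A) = dim_col A"
  by (auto simp: red_mat_def)

lemma red_mat_carrier [simp]: "A \<in> carrier_mat n m \<Longrightarrow> red_mat q A \<in> carrier_mat n m"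
  by (auto simp: red_mat_def)

lemma index_red_mat [simp]:
  "i < dim_row A \<Longrightarrow> j < dim_col A \<Longrightarrow> red_mat q A $$ (i,j) = A $$ (i,j) mod q"
  by (auto simp: red_mat_def)

lemma red_mat_eqD:
  "red_mat q A = red_mat q B \<Longrightarrow> i < dim_row A \<Longrightarrow> j < dim_col A \<Longrightarrow>
   A $$ (i,j) mod q = B $$ (i,j) mod q"
  by (metis dim_red_mat index_red_mat)

lemma red_mat_eqI:
  assumes "A \<in> carrier_mat n m" "B \<in> carrier_mat n m"
    and "\<And>i j. i < n \<Longrightarrow> j < m \<Longrightarrow> A $$ (i,j) mod q = B $$ (i,j) mod q"
  shows "red_mat q A = red_mat q B"
  by (rule eq_matI) (use assms in auto)

lemma red_mat_red_mat: "q' dvd q \<Longrightarrow> red_mat q' (red_mat q A) = red_mat q' A"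
  by (rule eq_matI) (auto simp: mod_mod_cancel)

lemma red_mat_canonical:
  assumes "\<And>i j. i < dim_row A \<Longrightarrow> j < dim_col A \<Longrightarrow> 0 \<le> A $$ (i,j) \<and> A $$ (i,j) < q"
  shows "red_mat q A = A"
  by (rule eq_matI) (use assms in auto)

lemma eq_of_mod_eq_in_range:
  fixes x y q :: int
  assumes "x mod q = y mod q" "x \<in> {0..<q}" "y \<in> {0..<q}"
  shows "x = y"
proof -
  have "x mod q = x" "y mod q = y"
    using assms(2,3) by (auto intro: mod_pos_pos_trivial)
  then show ?thesis
    using assms(1) by linarith
qed

definition canonical_mats :: "nat \<Rightarrow> int \<Rightarrow> int mat set" where
  "canonical_mats n q = {M \<in> carrier_mat n n. \<forall>i<n. \<forall>j<n. 0 \<le> M $$ (i,j) \<and> M $$ (i,j) < q}"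

lemma finite_canonical_mats: "finite (canonical_mats n q)"
  and card_canonical_mats: "card (canonical_mats n q) \<le> nat q ^ (n * n)"
proof -
  let ?I = "{..<n} \<times> {..<n}"
  let ?F = "PiE ?I (\<lambda>_. {0..<q})"
  have sub: "canonical_mats n q \<subseteq> (\<lambda>f. mat n n f) ` ?F"
  proof
    fix M assume M: "M \<in> canonical_mats n q"
    let ?f = "restrict (\<lambda>ij. M $$ ij) ?I"
    have "?f \<in> ?F" "M = mat n n ?f"
      using M by (auto simp: canonical_mats_def intro!: eq_matI)
    then show "M \<in> (\<lambda>f. mat n n f) ` ?F" by blast
  qed
  have fin: "finite ?F"
    by (rule finite_PiE) auto
  then show "finite (canonical_mats n q)"
    using finite_subset[OF sub] by blast
  have "card (canonical_mats n q) \<le> card ((\<lambda>f. mat n n f) ` ?F)"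
    by (rule card_mono[OF _ sub]) (use fin in auto)
  also have "\<dots> \<le> card ?F"
    by (rule card_image_le[OF fin])
  also have "\<dots> = nat q ^ (n * n)"
    by (simp add: card_PiE card_cartesian_product)
  finally show "card (canonical_mats n q) \<le> nat q ^ (n * n)" .
qed

lemma smult_smult_mat: "a \<cdot>\<^sub>m (b \<cdot>\<^sub>m A) = (a * b) \<cdot>\<^sub>m (A :: 'a :: semigroup_mult mat)"
  by (rule eq_matI) (auto simp: mult.assoc)

lemma red_mat_add_smult: "B \<in> carrier_mat n m \<Longrightarrow> A \<in> carrier_mat n m \<Longrightarrow>
  red_mat q (A + q \<cdot>\<^sub>m B) = red_mat q A"
  by (rule eq_matI) auto

lemma red_mat_eq_imp_add_smult:
  assumes A: "A \<in> carrier_mat n m" and B: "B \<in> carrier_mat n m"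
    and AB: "red_mat q A = red_mat q B"
  shows "\<exists>C \<in> carrier_mat n m. A = B + q \<cdot>\<^sub>m C"
proof
  let ?C = "mat n m (\<lambda>(i,j). (A $$ (i,j) - B $$ (i,j)) div q)"
  have "q dvd A $$ (i,j) - B $$ (i,j)" if "i < n" "j < m" for i j
    using red_mat_eqD[OF AB] that A by (auto simp: mod_eq_dvd_iff)
  then show "A = B + q \<cdot>\<^sub>m ?C"
    by (intro eq_matI) (use A B in auto)
qed simp

lemma red_mat_smult_cong:
  assumes "A \<in> carrier_mat n m" "A' \<in> carrier_mat n m" "red_mat q A = red_mat q A'"
    and "c mod q = c' mod q"
  shows "red_mat q (c \<cdot>\<^sub>m A) = red_mat q (c' \<cdot>\<^sub>m A')"
  using assms red_mat_eqD[OF assms(3)]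
  by (intro red_mat_eqI[of _ n m]) (auto intro: mod_mult_cong)

lemma red_mat_mult_left:
  assumes "dim_col A = dim_row B"
  shows "red_mat q (red_mat q A * B) = red_mat q (A * B)"
proof (rule eq_matI)
  fix i j assume "i < dim_row (red_mat q (A * B))" "j < dim_col (red_mat q (A * B))"
  moreover have "(\<Sum>k = 0..<dim_row B. (A $$ (i, k) mod q) * B $$ (k, j)) mod q
      = (\<Sum>k = 0..<dim_row B. ((A $$ (i, k) mod q) * B $$ (k, j)) mod q) mod q"
    by (simp add: mod_sum_eq)
  then have "(\<Sum>k = 0..<dim_row B. (A $$ (i, k) mod q) * B $$ (k, j)) mod q
      = (\<Sum>k = 0..<dim_row B. A $$ (i, k) * B $$ (k, j)) mod q"
    by (simp add: mod_mult_left_eq mod_sum_eq)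
  ultimately show "red_mat q (red_mat q A * B) $$ (i, j) = red_mat q (A * B) $$ (i, j)"
    using assms by (simp add: scalar_prod_def)
qed auto

lemma red_mat_mult_right:
  assumes "dim_col A = dim_row B"
  shows "red_mat q (A * red_mat q B) = red_mat q (A * B)"
proof (rule eq_matI)
  fix i j assume "i < dim_row (red_mat q (A * B))" "j < dim_col (red_mat q (A * B))"
  moreover have "(\<Sum>k = 0..<dim_row B. A $$ (i, k) * (B $$ (k, j) mod q)) mod q
      = (\<Sum>k = 0..<dim_row B. (A $$ (i, k) * (B $$ (k, j) mod q)) mod q) mod q"
    by (simp add: mod_sum_eq)
  then have "(\<Sum>k = 0..<dim_row B. A $$ (i, k) * (B $$ (k, j) mod q)) mod q
      = (\<Sum>k = 0..<dim_row B. A $$ (i, k) * B $$ (k, j)) mod q"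
    by (simp add: mod_mult_right_eq mod_sum_eq)
  ultimately show "red_mat q (A * red_mat q B) $$ (i, j) = red_mat q (A * B) $$ (i, j)"
    using assms by (simp add: scalar_prod_def)
qed auto

lemma red_mat_mult:
  "dim_col A = dim_row B \<Longrightarrow> red_mat q (red_mat q A * red_mat q B) = red_mat q (A * B)"
  using red_mat_mult_left[of A "red_mat q B" q] red_mat_mult_right[of A B q] by simp

lemma red_mat_mult_cong:
  assumes "dim_col A = dim_row B" "dim_col A' = dim_row B'"
    and "red_mat q A = red_mat q A'" "red_mat q B = red_mat q B'"
  shows "red_mat q (A * B) = red_mat q (A' * B')"
  by (metis assms red_mat_mult)

lemma det_red_mat_cong:
  assumes A: "A \<in> carrier_mat n n" and B: "B \<in> carrier_mat n n"
    and AB: "red_mat q A = red_mat q B"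
  shows "det A mod q = det B mod q"
proof -
  let ?t = "\<lambda>M f. signof f * (\<Prod>i = 0..<n. M $$ (i, f i))"
  have entry: "A $$ (i,j) mod q = B $$ (i,j) mod q" if "i < n" "j < n" for i j
    using red_mat_eqD[OF AB] that A by auto
  have "?t A f mod q = ?t B f mod q" if f: "f permutes {0..<n}" for f
  proof -
    have "f i < n" if "i < n" for i
      using permutes_in_image[OF f] that by auto
    then have "(\<Prod>i = 0..<n. A $$ (i, f i) mod q) = (\<Prod>i = 0..<n. B $$ (i, f i) mod q)"
      using entry by (intro prod.cong) auto
    then have "(\<Prod>i = 0..<n. A $$ (i, f i)) mod q = (\<Prod>i = 0..<n. B $$ (i, f i)) mod q"
      unfolding mod_prod_eq[of "\<lambda>i. A $$ (i, f i)", symmetric]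
        mod_prod_eq[of "\<lambda>i. B $$ (i, f i)", symmetric] by simp
    then show ?thesis
      by (rule mod_mult_cong[OF refl])
  qed
  then have "(\<Sum>f | f permutes {0..<n}. ?t A f mod q) = (\<Sum>f | f permutes {0..<n}. ?t B f mod q)"
    by (intro sum.cong) auto
  then have "(\<Sum>f | f permutes {0..<n}. ?t A f) mod q = (\<Sum>f | f permutes {0..<n}. ?t B f) mod q"
    unfolding mod_sum_eq[of "?t A", symmetric] mod_sum_eq[of "?t B", symmetric] by simp
  then show ?thesis
    unfolding det_def'[OF A] det_def'[OF B] .
qed

lemma det_red_mat: "A \<in> carrier_mat n n \<Longrightarrow> det (red_mat q A) mod q = det A mod q"
  by (rule det_red_mat_cong) auto

lemma red_mat_mat_delete_cong:
  assumes "A \<in> carrier_mat n m" "B \<in> carrier_mat n m" "red_mat q A = red_mat q B"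
  shows "red_mat q (mat_delete A i j) = red_mat q (mat_delete B i j)"
proof (rule eq_matI)
  fix a b assume "a < dim_row (red_mat q (mat_delete B i j))" "b < dim_col (red_mat q (mat_delete B i j))"
  then show "red_mat q (mat_delete A i j) $$ (a, b) = red_mat q (mat_delete B i j) $$ (a, b)"
    using assms red_mat_eqD[OF assms(3)] by (auto simp: mat_delete_def)
qed (use assms in auto)

lemma adj_mat_red_mat_cong:
  assumes A: "A \<in> carrier_mat n n" and B: "B \<in> carrier_mat n n"
    and AB: "red_mat q A = red_mat q B"
  shows "red_mat q (adj_mat A) = red_mat q (adj_mat B)"
proof (rule red_mat_eqI[of _ n n])
  fix i j assume ij: "i < n" "j < n"
  have "det (mat_delete A j i) mod q = det (mat_delete B j i) mod q"
    by (rule det_red_mat_cong[OF mat_delete_carrier[OF A] mat_delete_carrier[OF B]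
          red_mat_mat_delete_cong[OF A B AB]])
  then have "((-1)^(j+i) * det (mat_delete A j i)) mod q = ((-1)^(j+i) * det (mat_delete B j i)) mod q"
    by (rule mod_mult_cong[OF refl])
  then show "adj_mat A $$ (i, j) mod q = adj_mat B $$ (i, j) mod q"
    using A B ij by (simp add: adj_mat_def cofactor_def)
qed (use A B adj_mat in auto)

section \<open>Matrices congruent to the identity\<close>

lemma one_plus_smult_mult:
  fixes X Y :: "int mat"
  assumes X: "X \<in> carrier_mat n n" and Y: "Y \<in> carrier_mat n n"
  shows "(1\<^sub>m n + r \<cdot>\<^sub>m X) * (1\<^sub>m n + r \<cdot>\<^sub>m Y) = 1\<^sub>m n + r \<cdot>\<^sub>m (X + Y) + (r * r) \<cdot>\<^sub>m (X * Y)"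
proof -
  have "(1\<^sub>m n + r \<cdot>\<^sub>m X) * (1\<^sub>m n + r \<cdot>\<^sub>m Y)
      = (1\<^sub>m n + r \<cdot>\<^sub>m X) * 1\<^sub>m n + (1\<^sub>m n + r \<cdot>\<^sub>m X) * (r \<cdot>\<^sub>m Y)"
    by (rule mult_add_distrib_mat) (use X Y in auto)
  also have "\<dots> = (1\<^sub>m n + r \<cdot>\<^sub>m X) + (r \<cdot>\<^sub>m Y + (r \<cdot>\<^sub>m X) * (r \<cdot>\<^sub>m Y))"
    using add_mult_distrib_mat[of "1\<^sub>m n" n n "r \<cdot>\<^sub>m X" "r \<cdot>\<^sub>m Y" n] X Y by simp
  also have "(r \<cdot>\<^sub>m X) * (r \<cdot>\<^sub>m Y) = (r * r) \<cdot>\<^sub>m (X * Y)"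
    by (rule eq_matI)
      (use X Y in \<open>auto simp: sum_distrib_left scalar_prod_def algebra_simps intro!: sum.cong\<close>)
  also have "(1\<^sub>m n + r \<cdot>\<^sub>m X) + (r \<cdot>\<^sub>m Y + (r * r) \<cdot>\<^sub>m (X * Y))
      = 1\<^sub>m n + r \<cdot>\<^sub>m (X + Y) + (r * r) \<cdot>\<^sub>m (X * Y)"
    by (rule eq_matI) (use X Y in \<open>auto simp: algebra_simps\<close>)
  finally show ?thesis .
qed

lemma red_mat_one_plus_smult_mult:
  assumes A: "A \<in> carrier_mat n n" and B: "B \<in> carrier_mat n n"
    and X: "X \<in> carrier_mat n n" and Y: "Y \<in> carrier_mat n n"
    and AX: "red_mat (r*r) A = red_mat (r*r) (1\<^sub>m n + r \<cdot>\<^sub>m X)"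
    and BY: "red_mat (r*r) B = red_mat (r*r) (1\<^sub>m n + r \<cdot>\<^sub>m Y)"
  shows "red_mat (r*r) (A * B) = red_mat (r*r) (1\<^sub>m n + r \<cdot>\<^sub>m (X + Y))"
proof -
  have "red_mat (r*r) (A * B) = red_mat (r*r) ((1\<^sub>m n + r \<cdot>\<^sub>m X) * (1\<^sub>m n + r \<cdot>\<^sub>m Y))"
    by (rule red_mat_mult_cong) (use A B X Y AX BY in auto)
  also have "\<dots> = red_mat (r*r) (1\<^sub>m n + r \<cdot>\<^sub>m (X + Y) + (r * r) \<cdot>\<^sub>m (X * Y))"
    by (simp add: one_plus_smult_mult[OF X Y])
  also have "\<dots> = red_mat (r*r) (1\<^sub>m n + r \<cdot>\<^sub>m (X + Y))"
    by (rule red_mat_add_smult[of _ n n]) (use X Y in auto)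
  finally show ?thesis .
qed

lemma red_mat_one_plus_smult_pow:
  assumes A: "A \<in> carrier_mat n n" and Z: "Z \<in> carrier_mat n n"
    and AZ: "red_mat (r*r) A = red_mat (r*r) (1\<^sub>m n + r \<cdot>\<^sub>m Z)"
  shows "red_mat (r*r) (A ^\<^sub>m k) = red_mat (r*r) (1\<^sub>m n + r \<cdot>\<^sub>m (int k \<cdot>\<^sub>m Z))"
proof (induction k)
  case 0
  have "1\<^sub>m n + r \<cdot>\<^sub>m (0 \<cdot>\<^sub>m Z) = 1\<^sub>m n"
    by (rule eq_matI) (use Z in auto)
  then show ?case using A by simp
next
  case (Suc k)
  have "red_mat (r*r) (A ^\<^sub>m k * A) = red_mat (r*r) (1\<^sub>m n + r \<cdot>\<^sub>m (int k \<cdot>\<^sub>m Z + Z))"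
    by (rule red_mat_one_plus_smult_mult[OF _ A _ Z Suc.IH AZ]) (use A Z in auto)
  also have "int k \<cdot>\<^sub>m Z + Z = int (Suc k) \<cdot>\<^sub>m Z"
    by (rule eq_matI) (use Z in \<open>auto simp: algebra_simps\<close>)
  finally show ?case by simp
qed

lemma red_mat_one_plus_smult_iff:
  assumes r: "r \<noteq> 0" and X: "X \<in> carrier_mat n n" and Y: "Y \<in> carrier_mat n n"
  shows "red_mat (r*q) (1\<^sub>m n + r \<cdot>\<^sub>m X) = red_mat (r*q) (1\<^sub>m n + r \<cdot>\<^sub>m Y)
    \<longleftrightarrow> red_mat q X = red_mat q Y"
proof -
  have entry: "(e + r * x) mod (r*q) = (e + r * y) mod (r*q) \<longleftrightarrow> x mod q = y mod q" for e x y :: int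
  proof -
    have "(e + r * x) mod (r*q) = (e + r * y) mod (r*q) \<longleftrightarrow> r * q dvd r * (x - y)"
      by (simp add: mod_eq_dvd_iff algebra_simps)
    also have "\<dots> \<longleftrightarrow> x mod q = y mod q"
      using r by (simp add: mod_eq_dvd_iff)
    finally show ?thesis .
  qed
  show ?thesis
  proof
    assume "red_mat (r*q) (1\<^sub>m n + r \<cdot>\<^sub>m X) = red_mat (r*q) (1\<^sub>m n + r \<cdot>\<^sub>m Y)"
    from red_mat_eqD[OF this] show "red_mat q X = red_mat q Y"
      using X Y entry by (intro red_mat_eqI[of _ n n]) auto
  next
    assume "red_mat q X = red_mat q Y"
    from red_mat_eqD[OF this] show "red_mat (r*q) (1\<^sub>m n + r \<cdot>\<^sub>m X) = red_mat (r*q) (1\<^sub>m n + r \<cdot>\<^sub>m Y)"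
      using X Y entry by (intro red_mat_eqI[of _ n n]) auto
  qed
qed

lemma red_mat_one_plus_smult_exact:
  assumes M: "M \<in> carrier_mat n n" and W: "W \<in> carrier_mat n n"
    and MW: "red_mat (r*r) M = red_mat (r*r) (1\<^sub>m n + r \<cdot>\<^sub>m W)"
  obtains Z where "Z \<in> carrier_mat n n" "M = 1\<^sub>m n + r \<cdot>\<^sub>m Z" "red_mat r Z = red_mat r W"
proof -
  have "1\<^sub>m n + r \<cdot>\<^sub>m W \<in> carrier_mat n n"
    using W by simp
  then obtain C where C: "C \<in> carrier_mat n n" and MC: "M = 1\<^sub>m n + r \<cdot>\<^sub>m W + (r*r) \<cdot>\<^sub>m C"
    using red_mat_eq_imp_add_smult[OF M _ MW] by blast
  have "M = 1\<^sub>m n + r \<cdot>\<^sub>m (W + r \<cdot>\<^sub>m C)"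
  proof (rule eq_matI)
    fix i j assume "i < dim_row (1\<^sub>m n + r \<cdot>\<^sub>m (W + r \<cdot>\<^sub>m C))" "j < dim_col (1\<^sub>m n + r \<cdot>\<^sub>m (W + r \<cdot>\<^sub>m C))"
    then show "M $$ (i, j) = (1\<^sub>m n + r \<cdot>\<^sub>m (W + r \<cdot>\<^sub>m C)) $$ (i, j)"
      unfolding MC using W C by (simp add: algebra_simps)
  qed (use M W C in auto)
  moreover have "red_mat r (W + r \<cdot>\<^sub>m C) = red_mat r W"
    by (rule red_mat_add_smult[OF C W])
  moreover have "W + r \<cdot>\<^sub>m C \<in> carrier_mat n n"
    using W C by simp
  ultimately show ?thesis
    using that by blast
qed

lemma pow_mat_add:
  assumes A: "A \<in> carrier_mat n n"
  shows "A ^\<^sub>m (a + b) = A ^\<^sub>m a * A ^\<^sub>m b"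
proof (induction b)
  case (Suc b)
  then show ?case using A by (simp add: assoc_mult_mat[of _ n n _ n _ n])
qed (use A in simp)

lemma pow_mat_mult:
  assumes A: "A \<in> carrier_mat n n"
  shows "A ^\<^sub>m (a * b) = (A ^\<^sub>m a) ^\<^sub>m b"
proof (induction b)
  case (Suc b)
  have "A ^\<^sub>m (a * Suc b) = A ^\<^sub>m (a * b) * A ^\<^sub>m a"
    using pow_mat_add[OF A, of "a * b" a] by (simp add: add.commute)
  then show ?case using Suc by simp
qed simp

text \<open>The terms beyond first order are divisible by \<open>p^(2s)\<close>, hence by \<open>p^(s+2)\<close> as \<open>2 \<le> s\<close>.\<close>

lemma one_plus_smult_pow_prime:
  fixes p :: nat
  assumes Z: "Z \<in> carrier_mat n n" and s: "2 \<le> s"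
  shows "\<exists>Z' \<in> carrier_mat n n. (1\<^sub>m n + int p ^ s \<cdot>\<^sub>m Z) ^\<^sub>m p = 1\<^sub>m n + int p ^ Suc s \<cdot>\<^sub>m Z'
     \<and> red_mat (int p) Z' = red_mat (int p) Z"
proof -
  let ?r = "int p ^ s"
  let ?A = "1\<^sub>m n + ?r \<cdot>\<^sub>m Z"
  have A: "?A \<in> carrier_mat n n" using Z by auto
  have "red_mat (?r * ?r) (?A ^\<^sub>m p) = red_mat (?r * ?r) (1\<^sub>m n + ?r \<cdot>\<^sub>m (int p \<cdot>\<^sub>m Z))"
    by (rule red_mat_one_plus_smult_pow[OF A Z]) simp
  then obtain C where C: "C \<in> carrier_mat n n"
    and AC: "?A ^\<^sub>m p = 1\<^sub>m n + ?r \<cdot>\<^sub>m (int p \<cdot>\<^sub>m Z) + (?r * ?r) \<cdot>\<^sub>m C"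
    using red_mat_eq_imp_add_smult[of "?A ^\<^sub>m p" n n "1\<^sub>m n + ?r \<cdot>\<^sub>m (int p \<cdot>\<^sub>m Z)"] Z A by auto
  let ?Z' = "Z + int p ^ (s - 1) \<cdot>\<^sub>m C"
  have "s + s = Suc s + (s - 1)" using s by simp
  then have rr: "?r * ?r = int p ^ Suc s * int p ^ (s - 1)"
    by (metis power_add)
  have "?A ^\<^sub>m p = 1\<^sub>m n + int p ^ Suc s \<cdot>\<^sub>m ?Z'"
    unfolding AC
  proof (rule eq_matI)
    fix i j assume "i < dim_row (1\<^sub>m n + int p ^ Suc s \<cdot>\<^sub>m ?Z')" "j < dim_col (1\<^sub>m n + int p ^ Suc s \<cdot>\<^sub>m ?Z')"
    then have "i < n" "j < n" using C by auto
    then show "(1\<^sub>m n + ?r \<cdot>\<^sub>m (int p \<cdot>\<^sub>m Z) + (?r * ?r) \<cdot>\<^sub>m C) $$ (i, j)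
        = (1\<^sub>m n + int p ^ Suc s \<cdot>\<^sub>m ?Z') $$ (i, j)"
      using Z C rr by (simp add: algebra_simps, blast)
  qed (use Z C in auto)
  moreover have "int p ^ (s - 1) = int p * int p ^ (s - 2)"
    using s by (simp add: power_Suc[symmetric] Suc_diff_Suc numeral_2_eq_2)
  then have "red_mat (int p) ?Z' = red_mat (int p) Z"
    using red_mat_add_smult[of "int p ^ (s - 2) \<cdot>\<^sub>m C" n n Z "int p"] Z C
    by (simp add: smult_smult_mat)
  moreover have "?Z' \<in> carrier_mat n n" using Z C by auto
  ultimately show ?thesis by blast
qed

lemma one_plus_smult_pow_prime_power:
  fixes p :: nat
  assumes Z: "Z \<in> carrier_mat n n" and s: "2 \<le> s"
  shows "\<exists>Z' \<in> carrier_mat n n. (1\<^sub>m n + int p ^ s \<cdot>\<^sub>m Z) ^\<^sub>m (p ^ e) = 1\<^sub>m n + int p ^ (s + e) \<cdot>\<^sub>m Z'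
     \<and> red_mat (int p) Z' = red_mat (int p) Z"
proof (induction e)
  case 0
  then show ?case using Z by auto
next
  case (Suc e)
  then obtain Z1 where Z1: "Z1 \<in> carrier_mat n n"
    "(1\<^sub>m n + int p ^ s \<cdot>\<^sub>m Z) ^\<^sub>m (p ^ e) = 1\<^sub>m n + int p ^ (s + e) \<cdot>\<^sub>m Z1"
    "red_mat (int p) Z1 = red_mat (int p) Z" by blast
  obtain Z2 where Z2: "Z2 \<in> carrier_mat n n"
    "(1\<^sub>m n + int p ^ (s + e) \<cdot>\<^sub>m Z1) ^\<^sub>m p = 1\<^sub>m n + int p ^ Suc (s + e) \<cdot>\<^sub>m Z2"
    "red_mat (int p) Z2 = red_mat (int p) Z1"
    using one_plus_smult_pow_prime[OF Z1(1), of "s + e" p] s by auto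
  have "(1\<^sub>m n + int p ^ s \<cdot>\<^sub>m Z) ^\<^sub>m (p ^ Suc e) = ((1\<^sub>m n + int p ^ s \<cdot>\<^sub>m Z) ^\<^sub>m (p ^ e)) ^\<^sub>m p"
    using pow_mat_mult[of "1\<^sub>m n + int p ^ s \<cdot>\<^sub>m Z" n "p ^ e" p] Z by (simp add: mult.commute)
  then show ?case
    using Z1 Z2 by auto
qed

definition trace_mat :: "'a :: comm_monoid_add mat \<Rightarrow> 'a" where
  "trace_mat A = (\<Sum>i<dim_row A. A $$ (i,i))"

lemma trace_mat_split_last:
  assumes "M \<in> carrier_mat n n" "0 < n"
  shows "trace_mat M = (\<Sum>a<n - 1. M $$ (a, a)) + M $$ (n - 1, n - 1)"
  using assms by (cases n) (simp_all add: trace_mat_def)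

lemma trace_mat_smult:
  "(A :: 'a :: comm_semiring_0 mat) \<in> carrier_mat n n \<Longrightarrow> trace_mat (c \<cdot>\<^sub>m A) = c * trace_mat A"
  by (simp add: trace_mat_def sum_distrib_left)

lemma prod_one_plus_mult_first_order:
  fixes f :: "'i \<Rightarrow> int"
  assumes "finite S"
  shows "\<exists>k. (\<Prod>i\<in>S. 1 + r * f i) = 1 + r * sum f S + r * r * k"
  using assms
proof (induction S rule: finite_induct)
  case empty
  then show ?case by (intro exI[of _ 0]) simp
next
  case (insert x S)
  then obtain k where "(\<Prod>i\<in>S. 1 + r * f i) = 1 + r * sum f S + r * r * k"
    by blast
  then show ?case
    using insert by (intro exI[of _ "f x * sum f S + k + r * f x * k"]) (simp add: algebra_simps)
qed

text \<open>A permutation other than the identity moves at least two indices, so its term in the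
  Leibniz expansion of \<open>det (1 + r Y)\<close> contains two off-diagonal factors divisible by r.\<close>

lemma dvd_det_term_non_id:
  fixes Y :: "int mat"
  assumes Y: "Y \<in> carrier_mat n n" and f: "f permutes {0..<n}" "f \<noteq> id"
  shows "r * r dvd (\<Prod>k = 0..<n. (1\<^sub>m n + r \<cdot>\<^sub>m Y) $$ (k, f k))"
proof -
  let ?M = "1\<^sub>m n + r \<cdot>\<^sub>m Y"
  obtain i where i: "f i \<noteq> i"
    using f(2) by (auto simp: fun_eq_iff)
  define j where "j = f i"
  have i_n: "i < n" and j_n: "j < n"
    using i permutes_not_in[OF f(1), of i] permutes_in_image[OF f(1), of i] by (auto simp: j_def)
  have fi_n: "f i < n" and fj_n: "f j < n"
    using i_n j_n permutes_in_image[OF f(1)] by auto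
  have j: "f j \<noteq> j"
    using i permutes_inj[OF f(1)] by (auto simp: j_def inj_eq)
  have ij: "i \<noteq> j" using i by (simp add: j_def)
  have "(\<Prod>k = 0..<n. ?M $$ (k, f k)) = ?M $$ (i, f i) * (\<Prod>k \<in> {0..<n} - {i}. ?M $$ (k, f k))"
    using i_n by (simp add: prod.remove)
  also have "(\<Prod>k \<in> {0..<n} - {i}. ?M $$ (k, f k))
      = ?M $$ (j, f j) * (\<Prod>k \<in> {0..<n} - {i} - {j}. ?M $$ (k, f k))"
    by (rule prod.remove) (use j_n ij in auto)
  finally have "(\<Prod>k = 0..<n. ?M $$ (k, f k))
      = ?M $$ (i, f i) * (?M $$ (j, f j) * (\<Prod>k \<in> {0..<n} - {i} - {j}. ?M $$ (k, f k)))" .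
  moreover have "?M $$ (i, f i) = r * Y $$ (i, f i)" "?M $$ (j, f j) = r * Y $$ (j, f j)"
    using i j i_n j_n fi_n fj_n Y by auto
  ultimately show ?thesis
    by (simp add: mult_dvd_mono)
qed

lemma det_one_plus_smult_mod:
  fixes Y :: "int mat"
  assumes Y: "Y \<in> carrier_mat n n"
  shows "det (1\<^sub>m n + r \<cdot>\<^sub>m Y) mod (r * r) = (1 + r * trace_mat Y) mod (r * r)"
proof -
  let ?M = "1\<^sub>m n + r \<cdot>\<^sub>m Y"
  let ?P = "{f. f permutes {0..<n}}"
  let ?t = "\<lambda>f. signof f * (\<Prod>i = 0..<n. ?M $$ (i, f i))"
  have M: "?M \<in> carrier_mat n n"
    using Y by simp
  have "det ?M = ?t id + (\<Sum>f\<in>?P - {id}. ?t f)"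
    unfolding det_def'[OF M]
    by (rule sum.remove) (simp_all add: finite_permutations permutes_id)
  moreover have "r * r dvd (\<Sum>f\<in>?P - {id}. ?t f)"
    using dvd_det_term_non_id[OF Y] by (intro dvd_sum) auto
  then obtain m where "(\<Sum>f\<in>?P - {id}. ?t f) = r * r * m"
    by (auto elim!: dvdE)
  moreover obtain k where "(\<Prod>i\<in>{0..<n}. 1 + r * Y $$ (i,i)) = 1 + r * trace_mat Y + r * r * k"
    using prod_one_plus_mult_first_order[of "{0..<n}" r "\<lambda>i. Y $$ (i,i)"] Y
    by (auto simp: trace_mat_def atLeast0LessThan)
  moreover have "?t id = (\<Prod>i\<in>{0..<n}. 1 + r * Y $$ (i,i))"
    using Y by (simp add: sign_id)
  ultimately have "det ?M = 1 + r * trace_mat Y + (r * r) * (k + m)"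
    by (simp add: algebra_simps)
  then show ?thesis
    by (simp only: mod_mult_self2)
qed

section \<open>Lifting traceless matrices to determinant one\<close>

definition unit_entry_mat :: "nat \<Rightarrow> nat \<Rightarrow> nat \<Rightarrow> int mat" where
  "unit_entry_mat n k l = mat n n (\<lambda>(i,j). if i = k \<and> j = l then 1 else 0)"

lemma unit_entry_mat_carrier [simp]: "unit_entry_mat n k l \<in> carrier_mat n n"
  by (simp add: unit_entry_mat_def)

lemma index_unit_entry_mat [simp]:
  "i < n \<Longrightarrow> j < n \<Longrightarrow> unit_entry_mat n k l $$ (i,j) = (if i = k \<and> j = l then 1 else 0)"
  "dim_row (unit_entry_mat n k l) = n" "dim_col (unit_entry_mat n k l) = n"
  by (simp_all add: unit_entry_mat_def)

definition has_SL_lift :: "nat \<Rightarrow> int \<Rightarrow> int mat \<Rightarrow> bool" where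
  "has_SL_lift n r X \<longleftrightarrow>
     (\<exists>M \<in> carrier_mat n n. det M = 1 \<and> red_mat (r*r) M = red_mat (r*r) (1\<^sub>m n + r \<cdot>\<^sub>m X))"

lemma has_SL_lift_add:
  assumes X: "X \<in> carrier_mat n n" and Y: "Y \<in> carrier_mat n n"
    and "has_SL_lift n r X" "has_SL_lift n r Y"
  shows "has_SL_lift n r (X + Y)"
proof -
  obtain A B where A: "A \<in> carrier_mat n n" "det A = 1" "red_mat (r*r) A = red_mat (r*r) (1\<^sub>m n + r \<cdot>\<^sub>m X)"
    and B: "B \<in> carrier_mat n n" "det B = 1" "red_mat (r*r) B = red_mat (r*r) (1\<^sub>m n + r \<cdot>\<^sub>m Y)"
    using assms(3,4) by (auto simp: has_SL_lift_def)
  have "det (A * B) = 1"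
    using A B by (simp add: det_mult)
  moreover have "red_mat (r*r) (A * B) = red_mat (r*r) (1\<^sub>m n + r \<cdot>\<^sub>m (X + Y))"
    by (rule red_mat_one_plus_smult_mult[OF A(1) B(1) X Y A(3) B(3)])
  ultimately show ?thesis
    using A B unfolding has_SL_lift_def by (meson mult_carrier_mat)
qed

lemma has_SL_lift_zero: "has_SL_lift n r (0\<^sub>m n n)"
proof -
  have "1\<^sub>m n + r \<cdot>\<^sub>m 0\<^sub>m n n = (1\<^sub>m n :: int mat)"
    by (rule eq_matI) auto
  then show ?thesis
    unfolding has_SL_lift_def by (intro bexI[of _ "1\<^sub>m n"]) auto
qed

lemma has_SL_lift_exact:
  "M \<in> carrier_mat n n \<Longrightarrow> det M = 1 \<Longrightarrow> M = 1\<^sub>m n + r \<cdot>\<^sub>m X \<Longrightarrow> has_SL_lift n r X"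
  unfolding has_SL_lift_def by blast

lemma has_SL_lift_unit_entry:
  assumes "k \<noteq> l"
  shows "has_SL_lift n r (t \<cdot>\<^sub>m unit_entry_mat n k l)"
proof (rule has_SL_lift_exact)
  show "det (addrow_mat n (r * t) k l) = 1"
    using assms by (rule det_addrow_mat)
  show "addrow_mat n (r * t) k l = 1\<^sub>m n + r \<cdot>\<^sub>m (t \<cdot>\<^sub>m unit_entry_mat n k l)"
    by (rule eq_matI) auto
qed simp

text \<open>For \<open>i \<noteq> l\<close> the matrix \<open>N = E\<^sub>i\<^sub>i - E\<^sub>i\<^sub>l + E\<^sub>l\<^sub>i - E\<^sub>l\<^sub>l\<close> is a conjugate of \<open>-E\<^sub>i\<^sub>l\<close>,
  so \<open>1 + s N\<close> has determinant one; together with \<open>E\<^sub>i\<^sub>l\<close> and \<open>E\<^sub>l\<^sub>i\<close> it produces the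
  diagonal direction \<open>E\<^sub>i\<^sub>i - E\<^sub>l\<^sub>l\<close>.\<close>

lemma has_SL_lift_diagonal:
  assumes il: "i \<noteq> l" "i < n" "l < n"
  shows "has_SL_lift n r (t \<cdot>\<^sub>m (unit_entry_mat n i i - unit_entry_mat n l l))"
proof -
  let ?E = "unit_entry_mat n"
  let ?N = "?E i i - ?E i l + ?E l i - ?E l l"
  let ?s = "r * t"
  have "addrow_mat n 1 l i * (addrow_mat n (- ?s) i l * addrow_mat n (- 1) l i)
      = addrow 1 l i (addrow (- ?s) i l (addrow_mat n (- 1) l i))"
    using il by (simp add: addrow_mat[symmetric, of _ n n])
  also have "\<dots> = 1\<^sub>m n + r \<cdot>\<^sub>m (t \<cdot>\<^sub>m ?N)"
  proof (rule eq_matI)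
    fix a b assume "a < dim_row (1\<^sub>m n + r \<cdot>\<^sub>m (t \<cdot>\<^sub>m ?N))" "b < dim_col (1\<^sub>m n + r \<cdot>\<^sub>m (t \<cdot>\<^sub>m ?N))"
    then have "a < n" "b < n" by auto
    then show "addrow 1 l i (addrow (- ?s) i l (addrow_mat n (- 1) l i)) $$ (a, b)
        = (1\<^sub>m n + r \<cdot>\<^sub>m (t \<cdot>\<^sub>m ?N)) $$ (a, b)"
      using il by (cases "a = i"; cases "a = l"; cases "b = i"; cases "b = l") auto
  qed auto
  finally have "addrow_mat n 1 l i * (addrow_mat n (- ?s) i l * addrow_mat n (- 1) l i)
      = 1\<^sub>m n + r \<cdot>\<^sub>m (t \<cdot>\<^sub>m ?N)" .
  moreover have "det (addrow_mat n 1 l i * (addrow_mat n (- ?s) i l * addrow_mat n (- 1) l i)) = 1"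
  proof -
    have "addrow_mat n (- ?s) i l * addrow_mat n (- 1) l i \<in> carrier_mat n n"
      by (rule mult_carrier_mat[of _ n n]) simp_all
    then show ?thesis
      using il by (simp add: det_mult[OF addrow_mat_carrier] det_addrow_mat)
  qed
  ultimately have "has_SL_lift n r (t \<cdot>\<^sub>m ?N)"
    by (intro has_SL_lift_exact[of "addrow_mat n 1 l i * (addrow_mat n (- ?s) i l * addrow_mat n (- 1) l i)"])
      auto
  then have "has_SL_lift n r (t \<cdot>\<^sub>m ?N + t \<cdot>\<^sub>m ?E i l + (- t) \<cdot>\<^sub>m ?E l i)"
    using il by (intro has_SL_lift_add has_SL_lift_unit_entry) auto
  also have "t \<cdot>\<^sub>m ?N + t \<cdot>\<^sub>m ?E i l + (- t) \<cdot>\<^sub>m ?E l i = t \<cdot>\<^sub>m (?E i i - ?E l l)"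
    using il by (intro eq_matI) auto
  finally show ?thesis .
qed

text \<open>Coordinates of an \<open>n \<times> n\<close> matrix are numbered in row-major order; the first
  \<open>n * n - 1\<close> of them, all but the last diagonal entry, are coordinates on the traceless
  matrices, with the basis \<open>E\<^sub>k\<^sub>l\<close> (\<open>k \<noteq> l\<close>) and \<open>E\<^sub>k\<^sub>k - E\<^bsub>n-1,n-1\<^esub>\<close>.\<close>

definition row_major :: "nat \<Rightarrow> 'a mat \<Rightarrow> nat \<Rightarrow> 'a" where
  "row_major n X c = X $$ (c div n, c mod n)"

lemma row_major_index_bounds:
  fixes c n :: nat
  assumes c: "c < n * n - 1"
  shows "c div n < n" "c mod n < n" "(c div n, c mod n) \<noteq> (n - 1, n - 1)"
proof -
  have n: "0 < n" using c by (cases n) auto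
  show "c div n < n" using c n by (simp add: div_less_iff_less_mult)
  show "c mod n < n" using n by simp
  show "(c div n, c mod n) \<noteq> (n - 1, n - 1)"
  proof
    assume "(c div n, c mod n) = (n - 1, n - 1)"
    then have "c = (n - 1) * n + (n - 1)" using div_mult_mod_eq[of c n] by simp
    also have "\<dots> = n * n - 1" using n by (cases n) (auto simp: algebra_simps)
    finally show False using c by simp
  qed
qed

lemma row_major_index_less:
  fixes a b n :: nat
  assumes "a < n" "b < n" "(a, b) \<noteq> (n - 1, n - 1)"
  shows "a * n + b < n * n - 1"
proof -
  have "a * n + b \<le> (n - 1) * n + (n - 1)"
    using assms by (intro add_le_mono mult_le_mono1) auto
  moreover have "a * n + b \<noteq> (n - 1) * n + (n - 1)"
  proof
    assume eq: "a * n + b = (n - 1) * n + (n - 1)"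
    have dm: "(x * n + y) div n = x \<and> (x * n + y) mod n = y" if "y < n" for x y
      using that by simp
    from dm[of b a] dm[of "n - 1" "n - 1"] show False
      using eq assms by auto
  qed
  moreover have "(n - 1) * n + (n - 1) = n * n - 1"
    using assms by (cases n) (auto simp: algebra_simps)
  ultimately show ?thesis by linarith
qed

definition sl_basis :: "nat \<Rightarrow> nat \<Rightarrow> int mat" where
  "sl_basis n c = (if c div n \<noteq> c mod n then unit_entry_mat n (c div n) (c mod n)
     else unit_entry_mat n (c div n) (c div n) - unit_entry_mat n (n - 1) (n - 1))"

lemma sl_basis_carrier [simp]: "sl_basis n c \<in> carrier_mat n n"
  by (simp add: sl_basis_def minus_carrier_mat)

lemma dim_sl_basis [simp]: "dim_row (sl_basis n c) = n" "dim_col (sl_basis n c) = n"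
  using sl_basis_carrier[of n c] unfolding carrier_mat_def by auto

lemma index_sl_basis:
  fixes a b c n :: nat
  assumes c: "c < n * n - 1" and ab: "a < n" "b < n" "(a, b) \<noteq> (n - 1, n - 1)"
  shows "sl_basis n c $$ (a, b) = (if c = a * n + b then 1 else 0)"
proof -
  have "c = a * n + b \<longleftrightarrow> c div n = a \<and> c mod n = b"
    using ab(2) div_mult_mod_eq[of c n] by auto
  then show ?thesis
    using row_major_index_bounds[OF c] ab by (auto simp: sl_basis_def)
qed

lemma trace_sl_basis:
  assumes c: "c < n * n - 1"
  shows "trace_mat (sl_basis n c) = 0"
proof (cases "c div n = c mod n")
  case True
  then show ?thesis
    using row_major_index_bounds[OF c] by (simp add: sl_basis_def trace_mat_def sum_subtractf)
next
  case False
  then show ?thesis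
    by (auto simp: sl_basis_def trace_mat_def intro!: sum.neutral)
qed

lemma has_SL_lift_sl_basis:
  assumes c: "c < n * n - 1"
  shows "has_SL_lift n r (t \<cdot>\<^sub>m sl_basis n c)"
  using row_major_index_bounds[OF c] has_SL_lift_diagonal[of "c div n" "n - 1" n r t]
    has_SL_lift_unit_entry[of "c div n" "c mod n" n r t]
  by (auto simp: sl_basis_def)

definition sl_comb :: "nat \<Rightarrow> (nat \<Rightarrow> int) \<Rightarrow> nat list \<Rightarrow> int mat" where
  "sl_comb n v cs = foldr (\<lambda>c S. v c \<cdot>\<^sub>m sl_basis n c + S) cs (0\<^sub>m n n)"

lemma sl_comb_Cons: "sl_comb n v (c # cs) = v c \<cdot>\<^sub>m sl_basis n c + sl_comb n v cs"
  by (simp add: sl_comb_def)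

lemma sl_comb_carrier [simp]: "sl_comb n v cs \<in> carrier_mat n n"
  by (induction cs) (auto simp: sl_comb_def)

lemma dim_sl_comb [simp]: "dim_row (sl_comb n v cs) = n" "dim_col (sl_comb n v cs) = n"
  using sl_comb_carrier[of n v cs] unfolding carrier_mat_def by auto

lemma index_sl_comb:
  "a < n \<Longrightarrow> b < n \<Longrightarrow> sl_comb n v cs $$ (a, b) = (\<Sum>c\<leftarrow>cs. v c * sl_basis n c $$ (a, b))"
  by (induction cs) (auto simp: sl_comb_Cons, simp add: sl_comb_def)

lemma has_SL_lift_sl_comb:
  "set cs \<subseteq> {..<n * n - 1} \<Longrightarrow> has_SL_lift n r (sl_comb n v cs)"
proof (induction cs)
  case Nil
  then show ?case by (simp add: sl_comb_def has_SL_lift_zero)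
next
  case (Cons c cs)
  then have "has_SL_lift n r (v c \<cdot>\<^sub>m sl_basis n c + sl_comb n v cs)"
    by (intro has_SL_lift_add has_SL_lift_sl_basis) auto
  then show ?case by (simp add: sl_comb_def)
qed

definition traceless_mat :: "nat \<Rightarrow> (nat \<Rightarrow> int) \<Rightarrow> int mat" where
  "traceless_mat n v = sl_comb n v [0..<n * n - 1]"

lemma traceless_mat_carrier [simp]: "traceless_mat n v \<in> carrier_mat n n"
  by (simp add: traceless_mat_def)

lemma dim_traceless_mat [simp]: "dim_row (traceless_mat n v) = n" "dim_col (traceless_mat n v) = n"
  by (simp_all add: traceless_mat_def)

lemma has_SL_lift_traceless_mat: "has_SL_lift n r (traceless_mat n v)"
  unfolding traceless_mat_def by (rule has_SL_lift_sl_comb) auto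

lemma index_traceless_mat:
  fixes a b n :: nat
  assumes ab: "a < n" "b < n" "(a, b) \<noteq> (n - 1, n - 1)"
  shows "traceless_mat n v $$ (a, b) = v (a * n + b)"
proof -
  have "traceless_mat n v $$ (a, b) = (\<Sum>c\<in>{0..<n * n - 1}. v c * sl_basis n c $$ (a, b))"
    using ab by (simp add: traceless_mat_def index_sl_comb sum_set_upt_conv_sum_list_nat[symmetric])
  also have "\<dots> = (\<Sum>c\<in>{0..<n * n - 1}. if c = a * n + b then v c else 0)"
    using ab by (intro sum.cong) (auto simp: index_sl_basis)
  also have "\<dots> = v (a * n + b)"
    using row_major_index_less[OF ab] by simp
  finally show ?thesis .
qed

lemma row_major_traceless_mat: "c < n * n - 1 \<Longrightarrow> row_major n (traceless_mat n v) c = v c"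
  using index_traceless_mat[of "c div n" n "c mod n" v] row_major_index_bounds[of c n]
  by (simp add: row_major_def)

lemma trace_traceless_mat: "trace_mat (traceless_mat n v) = 0"
proof -
  have "trace_mat (traceless_mat n v) = (\<Sum>a<n. \<Sum>c\<in>{0..<n * n - 1}. v c * sl_basis n c $$ (a, a))"
    by (simp add: trace_mat_def traceless_mat_def index_sl_comb sum_set_upt_conv_sum_list_nat[symmetric])
  also have "\<dots> = (\<Sum>c\<in>{0..<n * n - 1}. v c * trace_mat (sl_basis n c))"
    by (subst sum.swap) (simp add: sum_distrib_left trace_mat_def)
  also have "\<dots> = 0"
    by (simp add: trace_sl_basis)
  finally show ?thesis .
qed

text \<open>For \<open>q = 0\<close> this says that a traceless matrix is determined by its coordinates.\<close>

lemma red_mat_traceless_mat_row_major: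
  assumes Y: "Y \<in> carrier_mat n n" and trY: "q dvd trace_mat Y"
  shows "red_mat q (traceless_mat n (row_major n Y)) = red_mat q Y"
proof (rule red_mat_eqI[of _ n n])
  let ?T = "traceless_mat n (row_major n Y)"
  have off: "?T $$ (a, b) = Y $$ (a, b)" if "a < n" "b < n" "(a, b) \<noteq> (n - 1, n - 1)" for a b
    using that by (simp add: index_traceless_mat row_major_def)
  have last: "?T $$ (n - 1, n - 1) mod q = Y $$ (n - 1, n - 1) mod q" if n: "0 < n"
  proof -
    have "(\<Sum>a<n - 1. ?T $$ (a, a)) = (\<Sum>a<n - 1. Y $$ (a, a))"
      using off by (intro sum.cong) auto
    then have "?T $$ (n - 1, n - 1) = Y $$ (n - 1, n - 1) - trace_mat Y"
      using trace_mat_split_last[OF traceless_mat_carrier n, of "row_major n Y"]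
        trace_mat_split_last[OF Y n] trace_traceless_mat[of n "row_major n Y"] by simp
    then show ?thesis
      using trY by (simp add: mod_eq_dvd_iff)
  qed
  fix a b assume "a < n" "b < n"
  then show "?T $$ (a, b) mod q = Y $$ (a, b) mod q"
    using off last by (cases "(a, b) = (n - 1, n - 1)") auto
qed (use Y in auto)

lemma has_SL_lift_traceless:
  assumes "X \<in> carrier_mat n n" "trace_mat X = 0"
  shows "has_SL_lift n r X"
proof -
  have "traceless_mat n (row_major n X) = X"
  proof -
    have "red_mat 0 M = M" for M :: "int mat"
      by (rule eq_matI) (simp_all add: red_mat_def)
    then show ?thesis
      using red_mat_traceless_mat_row_major[of X n 0] assms by simp
  qed
  then show ?thesis
    using has_SL_lift_traceless_mat by metis
qed

lemma red_mat_pow_one_plus_smult_Suc: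
  fixes q :: int
  assumes Z: "Z \<in> carrier_mat n n" and l: "1 \<le> l"
  shows "red_mat (q ^ Suc l) ((1\<^sub>m n + q ^ l \<cdot>\<^sub>m Z) ^\<^sub>m k)
    = red_mat (q ^ Suc l) (1\<^sub>m n + q ^ l \<cdot>\<^sub>m (int k \<cdot>\<^sub>m Z))"
proof -
  have "red_mat (q ^ l * q ^ l) ((1\<^sub>m n + q ^ l \<cdot>\<^sub>m Z) ^\<^sub>m k)
      = red_mat (q ^ l * q ^ l) (1\<^sub>m n + q ^ l \<cdot>\<^sub>m (int k \<cdot>\<^sub>m Z))"
    by (rule red_mat_one_plus_smult_pow) (use Z in auto)
  moreover have "Suc l \<le> l + l"
    using l by simp
  then have "q ^ Suc l dvd q ^ (l + l)"
    by (rule le_imp_power_dvd)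
  then have "q ^ Suc l dvd q ^ l * q ^ l"
    by (simp add: power_add)
  ultimately show ?thesis
    using red_mat_red_mat[of "q ^ Suc l" "q ^ l * q ^ l"] by metis
qed

lemma exists_det_one_first_order_prime_power:
  fixes p :: nat
  assumes W: "W \<in> carrier_mat n n" "trace_mat W = 0" and s: "2 \<le> s"
  obtains M Z where "M \<in> carrier_mat n n" "det M = 1" "Z \<in> carrier_mat n n"
    "M ^\<^sub>m (p ^ e) = 1\<^sub>m n + int p ^ (s + e) \<cdot>\<^sub>m Z" "red_mat (int p) Z = red_mat (int p) W"
proof -
  let ?P = "int p ^ s"
  obtain M where M: "M \<in> carrier_mat n n" "det M = 1"
    and M_cong: "red_mat (?P * ?P) M = red_mat (?P * ?P) (1\<^sub>m n + ?P \<cdot>\<^sub>m W)"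
    using has_SL_lift_traceless[OF W] by (auto simp: has_SL_lift_def)
  obtain Z1 where Z1: "Z1 \<in> carrier_mat n n" "M = 1\<^sub>m n + ?P \<cdot>\<^sub>m Z1"
    and Z1_cong: "red_mat ?P Z1 = red_mat ?P W"
    using red_mat_one_plus_smult_exact[OF M(1) W(1) M_cong] by blast
  have "int p ^ 1 dvd ?P"
    using s by (intro le_imp_power_dvd) simp
  then have "red_mat (int p) Z1 = red_mat (int p) W"
    using red_mat_red_mat[of "int p" ?P Z1] red_mat_red_mat[of "int p" ?P W] Z1_cong by simp
  then show ?thesis
    using one_plus_smult_pow_prime_power[OF Z1(1) s, of p e] Z1(2) M that by auto
qed

text \<open>If \<open>p\<close> divides the trace of Y and \<open>N = p^e u\<close> with \<open>p \<nmid> u\<close>, then \<open>1 + p^l Y\<close> is an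
  N-th power modulo \<open>p^(l+1)\<close> of a determinant-one integer matrix: lift \<open>u\<inverse> Y\<close> (made
  traceless) to first order at level \<open>l - e\<close>, and raise it to the \<open>p^e\<close>-th and then the u-th power.\<close>

lemma exists_det_one_root_mod:
  fixes p :: nat
  assumes p: "prime p" and u: "\<not> p dvd u" and l: "e + 2 \<le> l"
    and Y: "Y \<in> carrier_mat n n" and trY: "int p dvd trace_mat Y"
  shows "\<exists>M \<in> carrier_mat n n. det M = 1 \<and>
    red_mat (int p ^ Suc l) (M ^\<^sub>m (p ^ e * u)) = red_mat (int p ^ Suc l) (1\<^sub>m n + int p ^ l \<cdot>\<^sub>m Y)"
proof -
  obtain x where x: "(int u * x) mod int p = 1 mod int p"
    using cong_solve_coprime_int[of "int u" "int p"] p u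
    by (auto simp: cong_def prime_imp_coprime coprime_commute)
  define W where "W = traceless_mat n (row_major n Y)"
  have W: "W \<in> carrier_mat n n" "trace_mat W = 0" "red_mat (int p) W = red_mat (int p) Y"
    using red_mat_traceless_mat_row_major[OF Y trY] trace_traceless_mat by (auto simp: W_def)
  have xW: "x \<cdot>\<^sub>m W \<in> carrier_mat n n" "trace_mat (x \<cdot>\<^sub>m W) = 0"
    using W by (simp_all add: trace_mat_smult)
  have s: "2 \<le> l - e" "l - e + e = l"
    using l by simp_all
  obtain M Z where M: "M \<in> carrier_mat n n" "det M = 1" and Z: "Z \<in> carrier_mat n n"
    and MZ: "M ^\<^sub>m (p ^ e) = 1\<^sub>m n + int p ^ (l - e + e) \<cdot>\<^sub>m Z"
    and Z_cong: "red_mat (int p) Z = red_mat (int p) (x \<cdot>\<^sub>m W)"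
    by (rule exists_det_one_first_order_prime_power[OF xW s(1)])
  note MZ = MZ[unfolded s(2)]
  have "red_mat (int p ^ Suc l) (M ^\<^sub>m (p ^ e * u))
      = red_mat (int p ^ Suc l) (1\<^sub>m n + int p ^ l \<cdot>\<^sub>m (int u \<cdot>\<^sub>m Z))"
    using red_mat_pow_one_plus_smult_Suc[OF Z, of l "int p" u] pow_mat_mult[OF M(1), of "p ^ e" u] MZ l
    by simp
  also have "\<dots> = red_mat (int p ^ Suc l) (1\<^sub>m n + int p ^ l \<cdot>\<^sub>m Y)"
  proof -
    have "red_mat (int p) (int u \<cdot>\<^sub>m Z) = red_mat (int p) ((int u * x) \<cdot>\<^sub>m W)"
      using red_mat_smult_cong[OF Z xW(1) Z_cong refl] W(1) by (simp add: smult_smult_mat)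
    also have "\<dots> = red_mat (int p) (1 \<cdot>\<^sub>m W)"
      by (rule red_mat_smult_cong[OF W(1) W(1) refl x])
    also have "1 \<cdot>\<^sub>m W = W"
      by (rule eq_matI) (use W in auto)
    finally have "red_mat (int p) (int u \<cdot>\<^sub>m Z) = red_mat (int p) Y"
      using W by simp
    then show ?thesis
      using red_mat_one_plus_smult_iff[of "int p ^ l" "int u \<cdot>\<^sub>m Z" n Y "int p"] Z Y p
      by (simp add: prime_gt_0_nat mult.commute)
  qed
  finally show ?thesis
    using M by (intro bexI[of _ M]) auto
qed

lemma (in group) nat_pow_fact_mem_subgroup:
  assumes H: "subgroup H G" and fin: "finite (rcosets H)" and card: "card (rcosets H) \<le> n"
    and x: "x \<in> carrier G"
  shows "x [^] (fact n :: nat) \<in> H"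
proof -
  let ?f = "\<lambda>i::nat. H #> (x [^] i)"
  have mem: "x [^] (fact n :: nat) \<in> H" if ij: "i < j" "j \<le> n" "?f i = ?f j" for i j
  proof -
    have "x [^] j \<in> H #> x [^] i"
      using repr_independenceD[OF H _ ij(3)] x by simp
    then have "x [^] j \<otimes> inv (x [^] i) \<in> H"
      using subgroup.rcos_module_imp[OF H is_group] x by blast
    moreover have "x [^] j = x [^] (j - i) \<otimes> x [^] i"
      using nat_pow_mult[OF x, of "j - i" i] ij by simp
    ultimately have xji: "x [^] (j - i) \<in> H"
      using x by (simp add: m_assoc)
    have "j - i dvd (fact n :: nat)"
      using ij by (intro dvd_fact) auto
    then obtain k where k: "fact n = (j - i) * k"
      by (elim dvdE)
    have "(x [^] (j - i)) [^] m \<in> H" for m :: nat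
    proof (induction m)
      case (Suc m)
      then show ?case
        using subgroup.m_closed[OF H Suc xji] by simp
    qed (simp add: subgroup.one_closed[OF H])
    then show ?thesis
      using x by (simp add: nat_pow_pow k)
  qed
  have "?f ` {0..n} \<subseteq> rcosets H"
    using rcosetsI[OF subgroup.subset[OF H]] x by auto
  then have "card (?f ` {0..n}) \<le> card (rcosets H)"
    by (rule card_mono[OF fin])
  then have "card (?f ` {0..n}) < card {0..n}"
    using card by simp
  then obtain i j where "i \<in> {0..n}" "j \<in> {0..n}" "i \<noteq> j" "?f i = ?f j"
    using pigeonhole unfolding inj_on_def by blast
  then show ?thesis
    using mem[of i j] mem[of j i] by (cases "i < j") auto
qed

section \<open>The group \<open>SL\<^sub>d(\<int>\<^sub>p)\<close>\<close>

locale SL_Zp_group =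
  fixes p d :: nat
  assumes p_ge_2: "2 \<le> p"
begin

abbreviation G where "G \<equiv> SL_Zp p d"

lemma p_power_pos: "0 < int p ^ k"
  using p_ge_2 by simp

lemma mem_SL_Zp_iff: "x \<in> carrier G \<longleftrightarrow> (\<forall>k.
       x k \<in> carrier_mat d d
     \<and> (\<forall>i<d. \<forall>j<d. 0 \<le> x k $$ (i,j) \<and> x k $$ (i,j) < int p ^ k)
     \<and> det (x k) mod (int p ^ k) = 1 mod (int p ^ k)
     \<and> red_mat (int p ^ k) (x (Suc k)) = x k)"
  by (simp add: SL_Zp_def SL_Zp_carrier_def)

lemma level_mult: "(x \<otimes>\<^bsub>G\<^esub> y) k = red_mat (int p ^ k) (x k * y k)"
  by (simp add: SL_Zp_def)

lemma level_one: "\<one>\<^bsub>G\<^esub> k = red_mat (int p ^ k) (1\<^sub>m d)"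
  by (simp add: SL_Zp_def)

lemma level_carrier_mat: "x \<in> carrier G \<Longrightarrow> x k \<in> carrier_mat d d"
  using mem_SL_Zp_iff by blast

lemma level_det: "x \<in> carrier G \<Longrightarrow> det (x k) mod (int p ^ k) = 1 mod (int p ^ k)"
  using mem_SL_Zp_iff by blast

lemma level_range:
  "x \<in> carrier G \<Longrightarrow> i < d \<Longrightarrow> j < d \<Longrightarrow> 0 \<le> x k $$ (i,j) \<and> x k $$ (i,j) < int p ^ k"
  using mem_SL_Zp_iff by blast

lemma red_mat_level_Suc: "x \<in> carrier G \<Longrightarrow> red_mat (int p ^ k) (x (Suc k)) = x k"
  using mem_SL_Zp_iff by blast

lemma red_mat_level: "x \<in> carrier G \<Longrightarrow> red_mat (int p ^ k) (x k) = x k"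
  using level_range[of x _ _ k] level_carrier_mat[of x k] by (intro red_mat_canonical) auto

lemma red_mat_level_le:
  assumes x: "x \<in> carrier G" and jk: "j \<le> k"
  shows "red_mat (int p ^ j) (x k) = x j"
  using jk
proof (induction k)
  case (Suc k)
  show ?case
  proof (cases "j = Suc k")
    case False
    then have "j \<le> k" using Suc by simp
    then have "red_mat (int p ^ j) (x (Suc k)) = red_mat (int p ^ j) (red_mat (int p ^ k) (x (Suc k)))"
      by (simp add: red_mat_red_mat le_imp_power_dvd)
    also have "\<dots> = x j"
      using red_mat_level_Suc[OF x] Suc.IH[OF \<open>j \<le> k\<close>] by simp
    finally show ?thesis .
  qed (use red_mat_level[OF x, of "Suc k"] in simp)
qed (use red_mat_level[OF x, of 0] in simp)

lemma mult_closed: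
  assumes x: "x \<in> carrier G" and y: "y \<in> carrier G"
  shows "x \<otimes>\<^bsub>G\<^esub> y \<in> carrier G"
  unfolding mem_SL_Zp_iff level_mult
proof (rule allI, intro conjI)
  fix k
  let ?q = "int p ^ k"
  have xk: "x k \<in> carrier_mat d d" and yk: "y k \<in> carrier_mat d d"
    using level_carrier_mat x y by auto
  show "red_mat ?q (x k * y k) \<in> carrier_mat d d"
    using xk yk by auto
  show "\<forall>i<d. \<forall>j<d. 0 \<le> red_mat ?q (x k * y k) $$ (i, j) \<and> red_mat ?q (x k * y k) $$ (i, j) < ?q"
    using xk yk p_power_pos[of k] by auto
  have "det (red_mat ?q (x k * y k)) mod ?q = (det (x k) * det (y k)) mod ?q"
    using det_red_mat[of "x k * y k" d ?q] det_mult[OF xk yk] xk yk by simp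
  also have "\<dots> = 1 mod ?q"
    using level_det[OF x, of k] level_det[OF y, of k] by (metis mod_mult_cong mult_1)
  finally show "det (red_mat ?q (x k * y k)) mod ?q = 1 mod ?q" .
  have xs: "x (Suc k) \<in> carrier_mat d d" and ys: "y (Suc k) \<in> carrier_mat d d"
    using level_carrier_mat x y by auto
  have "red_mat ?q (red_mat (int p ^ Suc k) (x (Suc k) * y (Suc k))) = red_mat ?q (x (Suc k) * y (Suc k))"
    by (simp add: red_mat_red_mat le_imp_power_dvd)
  also have "\<dots> = red_mat ?q (red_mat ?q (x (Suc k)) * red_mat ?q (y (Suc k)))"
    using red_mat_mult[of "x (Suc k)" "y (Suc k)" ?q] xs ys by simp
  also have "\<dots> = red_mat ?q (x k * y k)"
    using red_mat_level_Suc x y by simp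
  finally show "red_mat ?q (red_mat (int p ^ Suc k) (x (Suc k) * y (Suc k))) = red_mat ?q (x k * y k)" .
qed

lemma one_closed: "\<one>\<^bsub>G\<^esub> \<in> carrier G"
  unfolding mem_SL_Zp_iff level_one
proof (rule allI, intro conjI)
  fix k
  show "red_mat (int p ^ k) (1\<^sub>m d) \<in> carrier_mat d d" by simp
  show "\<forall>i<d. \<forall>j<d. 0 \<le> red_mat (int p ^ k) (1\<^sub>m d) $$ (i, j) \<and>
      red_mat (int p ^ k) (1\<^sub>m d) $$ (i, j) < int p ^ k"
    using p_power_pos[of k] by auto
  show "det (red_mat (int p ^ k) (1\<^sub>m d)) mod int p ^ k = 1 mod int p ^ k"
    using det_red_mat[of "1\<^sub>m d" d "int p ^ k"] by simp
  show "red_mat (int p ^ k) (red_mat (int p ^ Suc k) (1\<^sub>m d)) = red_mat (int p ^ k) (1\<^sub>m d)"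
    by (simp add: red_mat_red_mat le_imp_power_dvd)
qed

lemma m_assoc:
  assumes x: "x \<in> carrier G" and y: "y \<in> carrier G" and z: "z \<in> carrier G"
  shows "(x \<otimes>\<^bsub>G\<^esub> y) \<otimes>\<^bsub>G\<^esub> z = x \<otimes>\<^bsub>G\<^esub> (y \<otimes>\<^bsub>G\<^esub> z)"
proof
  fix k
  let ?q = "int p ^ k"
  have c: "x k \<in> carrier_mat d d" "y k \<in> carrier_mat d d" "z k \<in> carrier_mat d d"
    using level_carrier_mat x y z by auto
  have "red_mat ?q (red_mat ?q (x k * y k) * z k) = red_mat ?q (x k * y k * z k)"
    by (rule red_mat_mult_left) (use c in auto)
  also have "\<dots> = red_mat ?q (x k * (y k * z k))"
    using c by simp
  also have "\<dots> = red_mat ?q (x k * red_mat ?q (y k * z k))"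
    by (rule red_mat_mult_right[symmetric]) (use c in auto)
  finally show "((x \<otimes>\<^bsub>G\<^esub> y) \<otimes>\<^bsub>G\<^esub> z) k = (x \<otimes>\<^bsub>G\<^esub> (y \<otimes>\<^bsub>G\<^esub> z)) k"
    by (simp add: level_mult)
qed

lemma l_one:
  assumes x: "x \<in> carrier G"
  shows "\<one>\<^bsub>G\<^esub> \<otimes>\<^bsub>G\<^esub> x = x"
proof
  fix k
  show "(\<one>\<^bsub>G\<^esub> \<otimes>\<^bsub>G\<^esub> x) k = x k"
    using red_mat_mult_left[of "1\<^sub>m d" "x k" "int p ^ k"] level_carrier_mat[OF x, of k]
      red_mat_level[OF x, of k]
    by (simp add: level_mult level_one)
qed

text \<open>Inverses are computed levelwise by the adjugate, since the determinant is 1 modulo \<open>p^k\<close>.\<close>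

definition adj_inv :: "(nat \<Rightarrow> int mat) \<Rightarrow> nat \<Rightarrow> int mat" where
  "adj_inv x = (\<lambda>k. red_mat (int p ^ k) (adj_mat (x k)))"

lemma adj_inv_closed:
  assumes x: "x \<in> carrier G"
  shows "adj_inv x \<in> carrier G"
  unfolding mem_SL_Zp_iff adj_inv_def
proof (rule allI, intro conjI)
  fix k
  let ?q = "int p ^ k"
  have xk: "x k \<in> carrier_mat d d"
    using level_carrier_mat x by auto
  note adj = adj_mat[OF xk]
  show "red_mat ?q (adj_mat (x k)) \<in> carrier_mat d d"
    using adj by auto
  show "\<forall>i<d. \<forall>j<d. 0 \<le> red_mat ?q (adj_mat (x k)) $$ (i, j) \<and> red_mat ?q (adj_mat (x k)) $$ (i, j) < ?q"
    using adj p_power_pos[of k] by auto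
  have "det (x k) * det (adj_mat (x k)) = det (x k) ^ d"
    using det_mult[OF xk adj(1)] adj(2) by simp
  then have "((det (x k) mod ?q) * det (adj_mat (x k))) mod ?q = (det (x k) mod ?q) ^ d mod ?q"
    by (metis mod_mult_left_eq power_mod)
  then have "det (adj_mat (x k)) mod ?q = 1 mod ?q"
    using level_det[OF x, of k] by (simp add: mod_mult_left_eq power_mod)
  then show "det (red_mat ?q (adj_mat (x k))) mod ?q = 1 mod ?q"
    using det_red_mat[OF adj(1), of ?q] by simp
  have xs: "x (Suc k) \<in> carrier_mat d d"
    using level_carrier_mat x by auto
  have "red_mat ?q (red_mat (int p ^ Suc k) (adj_mat (x (Suc k)))) = red_mat ?q (adj_mat (x (Suc k)))"
    by (simp add: red_mat_red_mat le_imp_power_dvd)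
  also have "\<dots> = red_mat ?q (adj_mat (red_mat ?q (x (Suc k))))"
    by (rule adj_mat_red_mat_cong[OF xs]) (use xs in auto)
  also have "\<dots> = red_mat ?q (adj_mat (x k))"
    using red_mat_level_Suc x by simp
  finally show "red_mat ?q (red_mat (int p ^ Suc k) (adj_mat (x (Suc k)))) = red_mat ?q (adj_mat (x k))" .
qed

lemma adj_inv_l_inv:
  assumes x: "x \<in> carrier G"
  shows "adj_inv x \<otimes>\<^bsub>G\<^esub> x = \<one>\<^bsub>G\<^esub>"
proof
  fix k
  let ?q = "int p ^ k"
  have xk: "x k \<in> carrier_mat d d"
    using level_carrier_mat x by auto
  note adj = adj_mat[OF xk]
  have "red_mat ?q (red_mat ?q (adj_mat (x k)) * x k) = red_mat ?q (adj_mat (x k) * x k)"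
    by (rule red_mat_mult_left) (use adj xk in auto)
  also have "\<dots> = red_mat ?q (1\<^sub>m d)"
    using adj(3) level_det[OF x, of k] by (intro eq_matI) auto
  finally show "(adj_inv x \<otimes>\<^bsub>G\<^esub> x) k = \<one>\<^bsub>G\<^esub> k"
    by (simp add: level_mult level_one adj_inv_def)
qed

lemma group_SL_Zp: "group G"
  by (rule groupI) (auto intro: mult_closed one_closed m_assoc l_one adj_inv_closed adj_inv_l_inv)

sublocale group G
  by (rule group_SL_Zp)

lemma level_canonical_mats: "x \<in> carrier G \<Longrightarrow> x k \<in> canonical_mats d (int p ^ k)"
  using level_carrier_mat level_range by (auto simp: canonical_mats_def)

lemma level_mult_cong: "x k = x' k \<Longrightarrow> y k = y' k \<Longrightarrow> (x \<otimes>\<^bsub>G\<^esub> y) k = (x' \<otimes>\<^bsub>G\<^esub> y') k"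
  by (simp add: level_mult)

definition cong_kernel :: "nat \<Rightarrow> (nat \<Rightarrow> int mat) set" where
  "cong_kernel k = {x \<in> carrier G. x k = \<one>\<^bsub>G\<^esub> k}"

lemma open_subgroup_SL_iff: "open_subgroup_SL p d H \<longleftrightarrow> subgroup H G \<and> (\<exists>k. cong_kernel k \<subseteq> H)"
  by (simp add: open_subgroup_SL_def cong_kernel_def)

lemma inv_mult_mem_cong_kernel:
  assumes x: "x \<in> carrier G" and y: "y \<in> carrier G" and xy: "x k = y k"
  shows "inv\<^bsub>G\<^esub> x \<otimes>\<^bsub>G\<^esub> y \<in> cong_kernel k"
proof -
  have "(inv\<^bsub>G\<^esub> x \<otimes>\<^bsub>G\<^esub> y) k = (inv\<^bsub>G\<^esub> x \<otimes>\<^bsub>G\<^esub> x) k"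
    by (rule level_mult_cong) (use xy in auto)
  then show ?thesis
    using x y by (simp add: cong_kernel_def)
qed

lemma subgroup_cong_kernel: "subgroup (cong_kernel k) G"
proof (rule subgroupI)
  show "cong_kernel k \<subseteq> carrier G" "cong_kernel k \<noteq> {}"
    using one_closed by (auto simp: cong_kernel_def)
next
  fix x assume "x \<in> cong_kernel k"
  then show "inv\<^bsub>G\<^esub> x \<in> cong_kernel k"
    using inv_mult_mem_cong_kernel[of x "\<one>\<^bsub>G\<^esub>" k] by (simp add: cong_kernel_def)
next
  fix x y assume "x \<in> cong_kernel k" "y \<in> cong_kernel k"
  then have "(x \<otimes>\<^bsub>G\<^esub> y) k = (\<one>\<^bsub>G\<^esub> \<otimes>\<^bsub>G\<^esub> \<one>\<^bsub>G\<^esub>) k"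
    by (intro level_mult_cong) (auto simp: cong_kernel_def)
  then show "x \<otimes>\<^bsub>G\<^esub> y \<in> cong_kernel k"
    using \<open>x \<in> cong_kernel k\<close> \<open>y \<in> cong_kernel k\<close> by (auto simp: cong_kernel_def)
qed

lemma cong_kernel_antimono: "j \<le> k \<Longrightarrow> cong_kernel k \<subseteq> cong_kernel j"
  unfolding cong_kernel_def
  by (auto simp: level_one red_mat_red_mat le_imp_power_dvd simp flip: red_mat_level_le)

lemma level_eq_mem_subgroup:
  assumes H: "subgroup H G" and K: "cong_kernel k \<subseteq> H"
    and h: "h \<in> H" and x: "x \<in> carrier G" and hx: "h k = x k"
  shows "x \<in> H"
proof -
  have hc: "h \<in> carrier G"
    using subgroup.subset[OF H] h by auto
  have "inv\<^bsub>G\<^esub> h \<otimes>\<^bsub>G\<^esub> x \<in> H"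
    using inv_mult_mem_cong_kernel[OF hc x hx] K by auto
  then have "h \<otimes>\<^bsub>G\<^esub> (inv\<^bsub>G\<^esub> h \<otimes>\<^bsub>G\<^esub> x) \<in> H"
    using subgroup.m_closed[OF H h] by blast
  then show ?thesis
    using hc x by (simp add: m_assoc[symmetric])
qed

definition embed_mat :: "int mat \<Rightarrow> nat \<Rightarrow> int mat" where
  "embed_mat M = (\<lambda>k. red_mat (int p ^ k) M)"

lemma embed_mat_closed:
  assumes M: "M \<in> carrier_mat d d" and det: "det M = 1"
  shows "embed_mat M \<in> carrier G"
  unfolding mem_SL_Zp_iff embed_mat_def
proof (rule allI, intro conjI)
  fix k
  show "red_mat (int p ^ k) M \<in> carrier_mat d d"
    using M by simp
  show "\<forall>i<d. \<forall>j<d. 0 \<le> red_mat (int p ^ k) M $$ (i, j) \<and> red_mat (int p ^ k) M $$ (i, j) < int p ^ k"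
    using M p_power_pos[of k] by auto
  show "det (red_mat (int p ^ k) M) mod int p ^ k = 1 mod int p ^ k"
    using det_red_mat[OF M] det by simp
  show "red_mat (int p ^ k) (red_mat (int p ^ Suc k) M) = red_mat (int p ^ k) M"
    by (simp add: red_mat_red_mat le_imp_power_dvd)
qed

lemma embed_mat_pow:
  assumes M: "M \<in> carrier_mat d d"
  shows "embed_mat M [^]\<^bsub>G\<^esub> k = embed_mat (M ^\<^sub>m k)"
proof (induction k)
  case 0
  then show ?case using M by (simp add: embed_mat_def level_one fun_eq_iff)
next
  case (Suc k)
  have "embed_mat (M ^\<^sub>m k) \<otimes>\<^bsub>G\<^esub> embed_mat M = embed_mat (M ^\<^sub>m k * M)"
    using red_mat_mult[of "M ^\<^sub>m k" M] M by (simp add: fun_eq_iff level_mult embed_mat_def)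
  then show ?case
    using Suc by simp
qed

lemma cong_kernel_level_form:
  assumes x: "x \<in> cong_kernel l" and lk: "l \<le> k"
  obtains Y where "Y \<in> carrier_mat d d" "x k = red_mat (int p ^ k) (1\<^sub>m d + int p ^ l \<cdot>\<^sub>m Y)"
proof -
  have xc: "x \<in> carrier G" and xl: "x l = \<one>\<^bsub>G\<^esub> l"
    using x by (auto simp: cong_kernel_def)
  have "red_mat (int p ^ l) (x k) = red_mat (int p ^ l) (1\<^sub>m d)"
    using red_mat_level_le[OF xc lk] xl by (simp add: level_one)
  then obtain Y where Y: "Y \<in> carrier_mat d d" "x k = 1\<^sub>m d + int p ^ l \<cdot>\<^sub>m Y"
    using red_mat_eq_imp_add_smult[OF level_carrier_mat[OF xc], of "1\<^sub>m d"] by auto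
  then have "x k = red_mat (int p ^ k) (1\<^sub>m d + int p ^ l \<cdot>\<^sub>m Y)"
    using red_mat_level[OF xc, of k] by simp
  then show ?thesis
    using that Y(1) by blast
qed

lemma dvd_trace_of_level_Suc:
  assumes x: "x \<in> carrier G" and l: "1 \<le> l" and Y: "Y \<in> carrier_mat d d"
    and xY: "x (Suc l) = red_mat (int p ^ Suc l) (1\<^sub>m d + int p ^ l \<cdot>\<^sub>m Y)"
  shows "int p dvd trace_mat Y"
proof -
  let ?q = "int p ^ Suc l" and ?r = "int p ^ l"
  have q_dvd: "?q dvd ?r * ?r"
  proof -
    have "Suc l \<le> l + l" using l by simp
    then have "?q dvd int p ^ (l + l)" by (rule le_imp_power_dvd)
    then show ?thesis by (simp add: power_add)
  qed
  have "1 mod ?q = det (x (Suc l)) mod ?q"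
    using level_det[OF x, of "Suc l"] by simp
  also have "\<dots> = det (1\<^sub>m d + ?r \<cdot>\<^sub>m Y) mod ?q"
    unfolding xY by (rule det_red_mat[of _ d]) (use Y in simp)
  also have "\<dots> = (1 + ?r * trace_mat Y) mod ?q"
    using det_one_plus_smult_mod[OF Y, of ?r] mod_mod_cancel[OF q_dvd] by metis
  finally have "?q dvd ?r * trace_mat Y"
    by (simp add: mod_eq_dvd_iff)
  then show ?thesis
    using p_ge_2 by simp
qed

lemma cong_kernel_subset_descent:
  assumes p: "prime p" and H: "subgroup H G" and u: "\<not> p dvd u"
    and pow: "\<And>x. x \<in> carrier G \<Longrightarrow> x [^]\<^bsub>G\<^esub> (p ^ e * u) \<in> H"
    and l: "e + 2 \<le> l" and K: "cong_kernel (Suc l) \<subseteq> H"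
  shows "cong_kernel l \<subseteq> H"
proof
  fix y assume y: "y \<in> cong_kernel l"
  then have yc: "y \<in> carrier G"
    by (simp add: cong_kernel_def)
  obtain Y where Y: "Y \<in> carrier_mat d d" "y (Suc l) = red_mat (int p ^ Suc l) (1\<^sub>m d + int p ^ l \<cdot>\<^sub>m Y)"
    using cong_kernel_level_form[OF y, of "Suc l"] by auto
  have "int p dvd trace_mat Y"
    using dvd_trace_of_level_Suc[OF yc _ Y] l by simp
  then obtain M where M: "M \<in> carrier_mat d d" "det M = 1"
    and M_root: "red_mat (int p ^ Suc l) (M ^\<^sub>m (p ^ e * u)) = red_mat (int p ^ Suc l) (1\<^sub>m d + int p ^ l \<cdot>\<^sub>m Y)"
    using exists_det_one_root_mod[OF p u l Y(1)] by blast
  let ?z = "embed_mat M [^]\<^bsub>G\<^esub> (p ^ e * u)"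
  have "?z \<in> H"
    using pow embed_mat_closed[OF M] by blast
  moreover have "?z (Suc l) = red_mat (int p ^ Suc l) (M ^\<^sub>m (p ^ e * u))"
    unfolding embed_mat_pow[OF M(1)] by (simp add: embed_mat_def)
  then have "?z (Suc l) = y (Suc l)"
    using M_root Y(2) by simp
  ultimately show "y \<in> H"
    using level_eq_mem_subgroup[OF H K _ yc] by blast
qed

lemma cong_kernel_subset_of_pow_mem:
  assumes p: "prime p" and H: "subgroup H G" and u: "\<not> p dvd u"
    and pow: "\<And>x. x \<in> carrier G \<Longrightarrow> x [^]\<^bsub>G\<^esub> (p ^ e * u) \<in> H"
    and K: "cong_kernel k \<subseteq> H"
  shows "cong_kernel (e + 2) \<subseteq> H"
proof -
  have "cong_kernel (e + 2 + m) \<subseteq> H \<Longrightarrow> cong_kernel (e + 2) \<subseteq> H" for m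
  proof (induction m)
    case (Suc m)
    then show ?case
      using cong_kernel_subset_descent[OF p H u pow, of "e + 2 + m"] by simp
  qed simp
  moreover have "k \<le> e + 2 + (k - (e + 2))"
    by simp
  then have "cong_kernel (e + 2 + (k - (e + 2))) \<subseteq> H"
    using K cong_kernel_antimono by blast
  ultimately show ?thesis by blast
qed

lemma finite_subgroups_containing_cong_kernel:
  "finite {H. subgroup H G \<and> cong_kernel k \<subseteq> H}" (is "finite ?S")
proof -
  let ?level = "\<lambda>H. (\<lambda>x. x k) ` H"
  have incl: "H \<subseteq> H'" if H: "H \<in> ?S" and H': "H' \<in> ?S" and eq: "?level H = ?level H'" for H H'
  proof
    fix h assume h: "h \<in> H"
    have "h k \<in> ?level H'"
      unfolding eq[symmetric] using h by (rule imageI)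
    then obtain h' where h': "h' \<in> H'" "h' k = h k"
      by (auto simp: image_iff)
    have "h \<in> carrier G"
      using h H subgroup.subset by blast
    then show "h \<in> H'"
      using level_eq_mem_subgroup[OF _ _ h'(1)] H' h'(2) by blast
  qed
  have "inj_on ?level ?S"
  proof (rule inj_onI)
    fix H H' assume "H \<in> ?S" "H' \<in> ?S" "?level H = ?level H'"
    then show "H = H'"
      using incl[of H H'] incl[of H' H] by (intro equalityI) simp_all
  qed
  moreover have "?level H \<in> Pow (canonical_mats d (int p ^ k))" if "H \<in> ?S" for H
    using level_canonical_mats[of _ k] subgroup.subset that by blast
  then have "?level ` ?S \<subseteq> Pow (canonical_mats d (int p ^ k))"
    by (rule image_subsetI)
  ultimately show ?thesis
    by (rule inj_on_finite) (simp add: finite_canonical_mats)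
qed

definition open_subgroups_index_le :: "nat \<Rightarrow> (nat \<Rightarrow> int mat) set set" where
  "open_subgroups_index_le n =
     {H. open_subgroup_SL p d H \<and> finite (rcosets\<^bsub>G\<^esub> H) \<and> card (rcosets\<^bsub>G\<^esub> H) \<le> n}"

lemma num_open_subgroups_eq: "num_open_subgroups p d n = card (open_subgroups_index_le n)"
  by (simp add: num_open_subgroups_def open_subgroups_index_le_def)

lemma cong_kernel_subset_of_index_le:
  assumes p: "prime p" and H: "H \<in> open_subgroups_index_le n"
  shows "cong_kernel (multiplicity p (fact n) + 2) \<subseteq> H"
proof -
  obtain u where u: "fact n = p ^ multiplicity p (fact n) * u" "\<not> p dvd u"
    using multiplicity_decompose'[of "fact n" p] p by (auto simp: prime_nat_iff)
  have sub: "subgroup H G" and "\<exists>k. cong_kernel k \<subseteq> H"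
    using H by (simp_all add: open_subgroups_index_le_def open_subgroup_SL_iff)
  moreover have "x [^]\<^bsub>G\<^esub> (p ^ multiplicity p (fact n) * u) \<in> H" if "x \<in> carrier G" for x
    using nat_pow_fact_mem_subgroup[OF sub _ _ that] H by (simp add: open_subgroups_index_le_def u(1)[symmetric])
  ultimately show ?thesis
    using cong_kernel_subset_of_pow_mem[OF p _ u(2)] by blast
qed

lemma finite_open_subgroups_index_le:
  assumes p: "prime p"
  shows "finite (open_subgroups_index_le n)"
proof (rule finite_subset[OF _ finite_subgroups_containing_cong_kernel])
  show "open_subgroups_index_le n
      \<subseteq> {H. subgroup H G \<and> cong_kernel (multiplicity p (fact n) + 2) \<subseteq> H}"
    using cong_kernel_subset_of_index_le[OF p]
    by (auto simp: open_subgroups_index_le_def open_subgroup_SL_iff)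
qed

end

section \<open>Graphs of linear maps modulo q\<close>

text \<open>Given \<open>F\<close>, the traceless matrices whose coordinates \<open>b \<ge> a\<close> are the F-combinations
  \<open>\<Sum>c<a. F (b, c) * X\<^sub>c\<close> of the first a coordinates form the graph of a linear map; modulo q
  it is a subgroup of index \<open>q^(n\<^sup>2 - 1 - a)\<close> in the additive group of traceless matrices.\<close>

definition graph_defect :: "nat \<Rightarrow> nat \<Rightarrow> (nat \<times> nat \<Rightarrow> int) \<Rightarrow> int mat \<Rightarrow> nat \<Rightarrow> int" where
  "graph_defect n a F X b = row_major n X b - (\<Sum>c<a. F (b, c) * row_major n X c)"

definition graph_mats :: "nat \<Rightarrow> nat \<Rightarrow> (nat \<times> nat \<Rightarrow> int) \<Rightarrow> int \<Rightarrow> int mat set" where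
  "graph_mats n a F q = {X \<in> carrier_mat n n. \<forall>b \<in> {a..<n * n - 1}. q dvd graph_defect n a F X b}"

lemma row_major_add:
  "X \<in> carrier_mat n n \<Longrightarrow> Y \<in> carrier_mat n n \<Longrightarrow> c < n * n - 1 \<Longrightarrow>
   row_major n (X + Y) c = row_major n X c + row_major n Y c"
  using row_major_index_bounds[of c n] by (simp add: row_major_def)

lemma row_major_cong:
  "red_mat q X = red_mat q Y \<Longrightarrow> X \<in> carrier_mat n n \<Longrightarrow> c < n * n - 1 \<Longrightarrow>
   row_major n X c mod q = row_major n Y c mod q"
  using row_major_index_bounds[of c n] red_mat_eqD[of q X Y] by (simp add: row_major_def)

lemma graph_defect_add:
  assumes X: "X \<in> carrier_mat n n" and Y: "Y \<in> carrier_mat n n"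
    and a: "a \<le> n * n - 1" and b: "b < n * n - 1"
  shows "graph_defect n a F (X + Y) b = graph_defect n a F X b + graph_defect n a F Y b"
proof -
  have "(\<Sum>c<a. F (b, c) * row_major n (X + Y) c)
      = (\<Sum>c<a. F (b, c) * row_major n X c) + (\<Sum>c<a. F (b, c) * row_major n Y c)"
    using a by (simp add: row_major_add[OF X Y] distrib_left sum.distrib)
  then show ?thesis
    by (simp add: graph_defect_def row_major_add[OF X Y b])
qed

lemma graph_defect_cong:
  assumes XY: "red_mat q X = red_mat q Y" and X: "X \<in> carrier_mat n n"
    and a: "a \<le> n * n - 1" and b: "b < n * n - 1"
  shows "graph_defect n a F X b mod q = graph_defect n a F Y b mod q"
proof -
  let ?s = "\<lambda>Z c. F (b, c) * row_major n Z c"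
  have "?s X c mod q = ?s Y c mod q" if "c \<in> {..<a}" for c
    using row_major_cong[OF XY X, of c] that a by (intro mod_mult_cong) auto
  then have "(\<Sum>c<a. ?s X c mod q) = (\<Sum>c<a. ?s Y c mod q)"
    by (rule sum.cong[OF refl])
  then have "(\<Sum>c<a. ?s X c) mod q = (\<Sum>c<a. ?s Y c) mod q"
    unfolding mod_sum_eq[of "?s X", symmetric] mod_sum_eq[of "?s Y", symmetric] by simp
  then show ?thesis
    unfolding graph_defect_def using row_major_cong[OF XY X b] by (intro mod_diff_cong)
qed

lemma zero_mem_graph_mats: "0\<^sub>m n n \<in> graph_mats n a F q"
proof -
  have "row_major n (0\<^sub>m n n :: int mat) c = 0" if "c < n * n - 1" for c
    using row_major_index_bounds[OF that] by (simp add: row_major_def)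
  moreover have "(\<Sum>c<a. F (b, c) * row_major n (0\<^sub>m n n) c) = 0" if "a \<le> b" "b < n * n - 1" for b
  proof (rule sum.neutral, rule ballI)
    fix c assume "c \<in> {..<a}"
    then have "c < n * n - 1" using that by auto
    then show "F (b, c) * row_major n (0\<^sub>m n n) c = 0"
      using calculation by simp
  qed
  ultimately have "graph_defect n a F (0\<^sub>m n n) b = 0" if "a \<le> b" "b < n * n - 1" for b
    using that by (simp add: graph_defect_def)
  then show ?thesis
    by (simp add: graph_mats_def)
qed

lemma add_mem_graph_mats:
  assumes X: "X \<in> graph_mats n a F q" and Y: "Y \<in> graph_mats n a F q" and a: "a \<le> n * n - 1"
  shows "X + Y \<in> graph_mats n a F q"
proof -
  have "q dvd graph_defect n a F (X + Y) b" if "b \<in> {a..<n * n - 1}" for b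
    using X Y that graph_defect_add[of X n Y a b F] a by (simp add: graph_mats_def)
  then show ?thesis
    using X Y by (simp add: graph_mats_def)
qed

lemma graph_mats_cong:
  assumes X: "X \<in> graph_mats n a F q" and Y: "Y \<in> carrier_mat n n"
    and XY: "red_mat q X = red_mat q Y" and a: "a \<le> n * n - 1"
  shows "Y \<in> graph_mats n a F q"
proof -
  have "q dvd graph_defect n a F Y b" if "b \<in> {a..<n * n - 1}" for b
  proof -
    have "q dvd graph_defect n a F X b"
      using X that by (simp add: graph_mats_def)
    moreover have "graph_defect n a F X b mod q = graph_defect n a F Y b mod q"
      using X that by (intro graph_defect_cong[OF XY _ a]) (auto simp: graph_mats_def)
    ultimately show ?thesis
      by (simp add: mod_eq_0_iff_dvd[symmetric])
  qed
  then show ?thesis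
    using Y by (simp add: graph_mats_def)
qed

lemma graph_mats_cancel:
  assumes X: "X \<in> graph_mats n a F q" and XY: "X + Y \<in> graph_mats n a F q"
    and Y: "Y \<in> carrier_mat n n" and a: "a \<le> n * n - 1"
  shows "Y \<in> graph_mats n a F q"
proof -
  have "q dvd graph_defect n a F Y b" if "b \<in> {a..<n * n - 1}" for b
  proof -
    have "q dvd graph_defect n a F X b" "q dvd graph_defect n a F (X + Y) b"
      using X XY that by (simp_all add: graph_mats_def)
    moreover have "graph_defect n a F (X + Y) b = graph_defect n a F X b + graph_defect n a F Y b"
      using X Y that a by (intro graph_defect_add) (auto simp: graph_mats_def)
    ultimately show ?thesis
      by (metis dvd_add_right_iff)
  qed
  then show ?thesis
    using Y by (simp add: graph_mats_def)
qed

lemma traceless_mat_mem_graph_mats_iff: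
  assumes "a \<le> n * n - 1"
  shows "traceless_mat n v \<in> graph_mats n a F q \<longleftrightarrow>
    (\<forall>b \<in> {a..<n * n - 1}. q dvd v b - (\<Sum>c<a. F (b, c) * v c))"
proof -
  have "graph_defect n a F (traceless_mat n v) b = v b - (\<Sum>c<a. F (b, c) * v c)" if "b \<in> {a..<n * n - 1}" for b
    using that assms by (simp add: graph_defect_def row_major_traceless_mat)
  then show ?thesis
    by (simp add: graph_mats_def)
qed

context SL_Zp_group
begin

lemma power_double: "int p ^ (2 * m) = int p ^ m * int p ^ m"
  by (simp add: mult_2 power_add)

text \<open>An element of the congruence kernel of level m is \<open>1 + p^m X\<close> at level \<open>2 m\<close>; its
  first-order part X is well defined modulo \<open>p^m\<close>, and is additive in the element.\<close>

definition first_order :: "nat \<Rightarrow> (nat \<Rightarrow> int mat) \<Rightarrow> int mat \<Rightarrow> bool" where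
  "first_order m x X \<longleftrightarrow> X \<in> carrier_mat d d \<and>
     x (2 * m) = red_mat (int p ^ m * int p ^ m) (1\<^sub>m d + int p ^ m \<cdot>\<^sub>m X)"

lemma first_order_one: "first_order m \<one>\<^bsub>G\<^esub> (0\<^sub>m d d)"
proof -
  have "1\<^sub>m d + int p ^ m \<cdot>\<^sub>m 0\<^sub>m d d = (1\<^sub>m d :: int mat)"
    by (rule eq_matI) auto
  then show ?thesis
    by (simp add: first_order_def level_one power_double)
qed

lemma first_order_level_eq: "first_order m x X \<Longrightarrow> y (2 * m) = x (2 * m) \<Longrightarrow> first_order m y X"
  by (simp add: first_order_def)

lemma first_order_mult:
  assumes "first_order m x X" "first_order m y Y"
  shows "first_order m (x \<otimes>\<^bsub>G\<^esub> y) (X + Y)"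
proof -
  let ?Q = "int p ^ m"
  have X: "X \<in> carrier_mat d d" and xX: "x (2 * m) = red_mat (?Q * ?Q) (1\<^sub>m d + ?Q \<cdot>\<^sub>m X)"
    and Y: "Y \<in> carrier_mat d d" and yY: "y (2 * m) = red_mat (?Q * ?Q) (1\<^sub>m d + ?Q \<cdot>\<^sub>m Y)"
    using assms by (auto simp: first_order_def)
  have "(x \<otimes>\<^bsub>G\<^esub> y) (2 * m) = red_mat (?Q * ?Q) (x (2 * m) * y (2 * m))"
    by (simp add: level_mult power_double)
  also have "\<dots> = red_mat (?Q * ?Q) ((1\<^sub>m d + ?Q \<cdot>\<^sub>m X) * (1\<^sub>m d + ?Q \<cdot>\<^sub>m Y))"
    unfolding xX yY by (rule red_mat_mult) (use X Y in auto)
  also have "\<dots> = red_mat (?Q * ?Q) (1\<^sub>m d + ?Q \<cdot>\<^sub>m (X + Y))"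
    by (rule red_mat_one_plus_smult_mult[of _ d]) (use X Y in auto)
  finally show ?thesis
    using X Y by (simp add: first_order_def)
qed

lemma first_order_level_cong:
  assumes "first_order m x X" "first_order m y Y" "x (2 * m) = y (2 * m)"
  shows "red_mat (int p ^ m) X = red_mat (int p ^ m) Y"
  using assms red_mat_one_plus_smult_iff[of "int p ^ m" X d Y "int p ^ m"] p_ge_2
  by (simp add: first_order_def)

lemma first_order_imp_cong_kernel:
  assumes x: "x \<in> carrier G" and xX: "first_order m x X"
  shows "x \<in> cong_kernel m"
proof -
  let ?Q = "int p ^ m"
  have X: "X \<in> carrier_mat d d"
    using xX by (simp add: first_order_def)
  have "x m = red_mat ?Q (x (2 * m))"
    using red_mat_level_le[OF x, of m "2 * m"] by simp
  also have "\<dots> = red_mat ?Q (1\<^sub>m d + ?Q \<cdot>\<^sub>m X)"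
    using xX by (simp add: first_order_def red_mat_red_mat)
  also have "\<dots> = \<one>\<^bsub>G\<^esub> m"
    using red_mat_add_smult[OF X, of "1\<^sub>m d" ?Q] by (simp add: level_one)
  finally show ?thesis
    using x by (simp add: cong_kernel_def)
qed

lemma cong_kernel_imp_first_order:
  assumes "x \<in> cong_kernel m"
  obtains X where "first_order m x X"
  using cong_kernel_level_form[OF assms, of "2 * m"] that by (auto simp: first_order_def power_double)

lemma exists_first_order_traceless:
  assumes X: "X \<in> carrier_mat d d" "trace_mat X = 0"
  shows "\<exists>w \<in> carrier G. first_order m w X"
proof -
  let ?Q = "int p ^ m"
  obtain M where M: "M \<in> carrier_mat d d" "det M = 1"
    "red_mat (?Q * ?Q) M = red_mat (?Q * ?Q) (1\<^sub>m d + ?Q \<cdot>\<^sub>m X)"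
    using has_SL_lift_traceless[OF X] by (auto simp: has_SL_lift_def)
  then have "first_order m (embed_mat M) X"
    using X by (simp add: first_order_def embed_mat_def power_double)
  then show ?thesis
    using embed_mat_closed[OF M(1,2)] by blast
qed

definition first_order_preimage :: "nat \<Rightarrow> int mat set \<Rightarrow> (nat \<Rightarrow> int mat) set" where
  "first_order_preimage m V = {x \<in> carrier G. \<exists>X \<in> V. first_order m x X}"

text \<open>The conditions on V say that it is the preimage of a subgroup of \<open>(\<int>/p^m)\<^sup>d\<^sup>\<times>\<^sup>d\<close>.\<close>

lemma subgroup_first_order_preimage:
  assumes V: "V \<subseteq> carrier_mat d d" "0\<^sub>m d d \<in> V"
    and add: "\<And>X Y. X \<in> V \<Longrightarrow> Y \<in> V \<Longrightarrow> X + Y \<in> V"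
    and cong: "\<And>X Y. X \<in> V \<Longrightarrow> Y \<in> carrier_mat d d \<Longrightarrow>
      red_mat (int p ^ m) X = red_mat (int p ^ m) Y \<Longrightarrow> Y \<in> V"
    and cancel: "\<And>X Y. X \<in> V \<Longrightarrow> X + Y \<in> V \<Longrightarrow> Y \<in> carrier_mat d d \<Longrightarrow> Y \<in> V"
  shows "subgroup (first_order_preimage m V) G"
proof (rule subgroupI)
  show "first_order_preimage m V \<subseteq> carrier G"
    by (auto simp: first_order_preimage_def)
  show "first_order_preimage m V \<noteq> {}"
    using first_order_one V(2) one_closed unfolding first_order_preimage_def by blast
next
  fix x assume "x \<in> first_order_preimage m V"
  then obtain X where x: "x \<in> carrier G" and X: "X \<in> V" "first_order m x X"
    by (auto simp: first_order_preimage_def)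
  have "inv\<^bsub>G\<^esub> x \<in> cong_kernel m"
    using subgroup.m_inv_closed[OF subgroup_cong_kernel first_order_imp_cong_kernel[OF x X(2)]] .
  then obtain Z where Z: "first_order m (inv\<^bsub>G\<^esub> x) Z"
    by (rule cong_kernel_imp_first_order)
  have "red_mat (int p ^ m) (0\<^sub>m d d) = red_mat (int p ^ m) (X + Z)"
    using first_order_level_cong[OF first_order_one first_order_mult[OF X(2) Z]] x by simp
  moreover have Zc: "Z \<in> carrier_mat d d"
    using Z by (simp add: first_order_def)
  moreover have "X + Z \<in> carrier_mat d d"
    using X(1) V(1) Zc by (intro add_carrier_mat) auto
  ultimately have "X + Z \<in> V"
    using cong[OF V(2)] by blast
  then have "Z \<in> V"
    by (rule cancel[OF X(1) _ Zc])
  then show "inv\<^bsub>G\<^esub> x \<in> first_order_preimage m V"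
    using Z x by (auto simp: first_order_preimage_def)
next
  fix x y assume "x \<in> first_order_preimage m V" "y \<in> first_order_preimage m V"
  then obtain X Y where x: "x \<in> carrier G" "X \<in> V" "first_order m x X"
    and y: "y \<in> carrier G" "Y \<in> V" "first_order m y Y"
    unfolding first_order_preimage_def by blast
  have "x \<otimes>\<^bsub>G\<^esub> y \<in> carrier G" "X + Y \<in> V" "first_order m (x \<otimes>\<^bsub>G\<^esub> y) (X + Y)"
    using mult_closed[OF x(1) y(1)] add[OF x(2) y(2)] first_order_mult[OF x(3) y(3)] .
  then show "x \<otimes>\<^bsub>G\<^esub> y \<in> first_order_preimage m V"
    unfolding first_order_preimage_def by blast
qed

lemma cong_kernel_subset_first_order_preimage:
  assumes "0\<^sub>m d d \<in> V"
  shows "cong_kernel (2 * m) \<subseteq> first_order_preimage m V"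
proof
  fix x assume "x \<in> cong_kernel (2 * m)"
  then have x: "x \<in> carrier G" "x (2 * m) = \<one>\<^bsub>G\<^esub> (2 * m)"
    by (simp_all add: cong_kernel_def)
  then have "first_order m x (0\<^sub>m d d)"
    by (intro first_order_level_eq[OF first_order_one])
  then show "x \<in> first_order_preimage m V"
    using assms x(1) unfolding first_order_preimage_def by blast
qed

lemma rcosets_eq_of_level_eq:
  assumes H: "subgroup H G" and K: "cong_kernel k \<subseteq> H"
    and C1: "C1 \<in> rcosets\<^bsub>G\<^esub> H" and C2: "C2 \<in> rcosets\<^bsub>G\<^esub> H"
    and x: "x \<in> C1" and y: "y \<in> C2" and xy: "x k = y k"
  shows "C1 = C2"
proof -
  obtain g1 where g1: "g1 \<in> carrier G" "C1 = H #>\<^bsub>G\<^esub> g1"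
    using C1 by (auto simp: RCOSETS_def)
  obtain g2 where g2: "g2 \<in> carrier G" "C2 = H #>\<^bsub>G\<^esub> g2"
    using C2 by (auto simp: RCOSETS_def)
  have xc: "x \<in> carrier G"
    using subgroup.elemrcos_carrier[OF H is_group g1(1)] x g1(2) by blast
  have yc: "y \<in> carrier G"
    using subgroup.elemrcos_carrier[OF H is_group g2(1)] y g2(2) by blast
  have "(y \<otimes>\<^bsub>G\<^esub> inv\<^bsub>G\<^esub> y) k = (x \<otimes>\<^bsub>G\<^esub> inv\<^bsub>G\<^esub> y) k"
    by (rule level_mult_cong) (use xy in auto)
  then have "x \<otimes>\<^bsub>G\<^esub> inv\<^bsub>G\<^esub> y \<in> H"
    using level_eq_mem_subgroup[OF H K subgroup.one_closed[OF H]] xc yc by simp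
  then have "x \<in> H #>\<^bsub>G\<^esub> y"
    using subgroup.rcos_module_rev[OF H is_group yc xc] by blast
  then have "H #>\<^bsub>G\<^esub> y = H #>\<^bsub>G\<^esub> x"
    using repr_independence[OF _ yc H] by blast
  moreover have "H #>\<^bsub>G\<^esub> g1 = H #>\<^bsub>G\<^esub> x"
    using repr_independence[OF _ g1(1) H] x g1(2) by blast
  moreover have "H #>\<^bsub>G\<^esub> g2 = H #>\<^bsub>G\<^esub> y"
    using repr_independence[OF _ g2(1) H] y g2(2) by blast
  ultimately show ?thesis
    using g1(2) g2(2) by simp
qed

lemma card_le_card_level_rcoset:
  assumes H: "subgroup H G" and C: "C \<in> rcosets\<^bsub>G\<^esub> H"
    and w: "\<And>i. i \<in> I \<Longrightarrow> w i \<in> H" and inj: "inj_on (\<lambda>i. w i k) I"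
  shows "card I \<le> card ((\<lambda>x. x k) ` C)"
proof -
  obtain g where g: "g \<in> carrier G" "C = H #>\<^bsub>G\<^esub> g"
    using C by (auto simp: RCOSETS_def)
  have wc: "w i \<in> carrier G" if "i \<in> I" for i
    using w[OF that] subgroup.subset[OF H] by blast
  let ?phi = "\<lambda>i. (w i \<otimes>\<^bsub>G\<^esub> g) k"
  have sub: "?phi ` I \<subseteq> (\<lambda>x. x k) ` C"
    using w g by (auto simp: r_coset_def)
  have inj_phi: "inj_on ?phi I"
  proof (rule inj_onI)
    fix i j assume ij: "i \<in> I" "j \<in> I" and eq: "?phi i = ?phi j"
    have "((w i \<otimes>\<^bsub>G\<^esub> g) \<otimes>\<^bsub>G\<^esub> inv\<^bsub>G\<^esub> g) k = ((w j \<otimes>\<^bsub>G\<^esub> g) \<otimes>\<^bsub>G\<^esub> inv\<^bsub>G\<^esub> g) k"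
      by (rule level_mult_cong) (use eq in auto)
    then have "w i k = w j k"
      using wc[OF ij(1)] wc[OF ij(2)] g(1) by (simp add: m_assoc)
    then show "i = j"
      using inj ij by (simp add: inj_on_def)
  qed
  have fin: "finite ((\<lambda>x. x k) ` C)"
  proof (rule finite_subset[OF _ finite_canonical_mats])
    show "(\<lambda>x. x k) ` C \<subseteq> canonical_mats d (int p ^ k)"
      using subgroup.elemrcos_carrier[OF H is_group g(1)] g(2) level_canonical_mats by blast
  qed
  show ?thesis
    by (rule card_inj_on_le[OF inj_phi sub fin])
qed

text \<open>Distinct cosets of a subgroup containing the congruence kernel of level k have disjoint
  images at level k, and each image is at least as large as any set of elements of the
  subgroup that are distinct at level k.\<close>

lemma card_rcosets_mult_le:
  assumes H: "subgroup H G" and K: "cong_kernel k \<subseteq> H"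
    and w: "\<And>i. i \<in> I \<Longrightarrow> w i \<in> H" and inj: "inj_on (\<lambda>i. w i k) I"
  shows "finite (rcosets\<^bsub>G\<^esub> H) \<and> card (rcosets\<^bsub>G\<^esub> H) * card I \<le> p ^ (k * (d * d))"
proof -
  let ?R = "rcosets\<^bsub>G\<^esub> H" and ?T = "canonical_mats d (int p ^ k)"
  let ?lev = "\<lambda>C. (\<lambda>x. x k) ` C"
  have lev_T: "?lev C \<subseteq> ?T" if "C \<in> ?R" for C
    using subgroup.rcosets_carrier[OF H is_group that] level_canonical_mats by blast
  have disj: "?lev C1 \<inter> ?lev C2 = {}" if "C1 \<in> ?R" "C2 \<in> ?R" "C1 \<noteq> C2" for C1 C2
    using rcosets_eq_of_level_eq[OF H K that(1,2)] that(3) by blast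
  have "inj_on ?lev ?R"
  proof (rule inj_onI)
    fix C1 C2 assume C: "C1 \<in> ?R" "C2 \<in> ?R" and eq: "?lev C1 = ?lev C2"
    have "?lev C1 \<noteq> {}"
      using subgroup.rcosets_non_empty[OF H C(1)] by blast
    then show "C1 = C2"
      using disj[OF C] eq by blast
  qed
  moreover have "?lev ` ?R \<subseteq> Pow ?T"
    using lev_T by blast
  ultimately have fin: "finite ?R"
    by (rule inj_on_finite) (simp add: finite_canonical_mats)
  have "card ?R * card I \<le> (\<Sum>C\<in>?R. card (?lev C))"
    using sum_bounded_below[of ?R "card I" "\<lambda>C. card (?lev C)"]
      card_le_card_level_rcoset[OF H _ w inj] by (simp add: mult.commute)
  also have "\<dots> = card (\<Union>C\<in>?R. ?lev C)"
  proof (rule card_UN_disjoint[symmetric, OF fin])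
    show "\<forall>C\<in>?R. finite (?lev C)"
      using finite_subset[OF lev_T finite_canonical_mats] by blast
    show "\<forall>C1\<in>?R. \<forall>C2\<in>?R. C1 \<noteq> C2 \<longrightarrow> ?lev C1 \<inter> ?lev C2 = {}"
      using disj by blast
  qed
  also have "\<dots> \<le> card ?T"
    using lev_T by (intro card_mono[OF finite_canonical_mats]) blast
  also have "\<dots> \<le> p ^ (k * (d * d))"
    using card_canonical_mats[of d "int p ^ k"] by (simp add: nat_power_eq power_mult)
  finally show ?thesis
    using fin by simp
qed

section \<open>Many open subgroups of small index\<close>

definition graph_subgroup :: "nat \<Rightarrow> nat \<Rightarrow> (nat \<times> nat \<Rightarrow> int) \<Rightarrow> (nat \<Rightarrow> int mat) set" where
  "graph_subgroup m a F = first_order_preimage m (graph_mats d a F (int p ^ m))"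

lemma subgroup_graph_subgroup:
  assumes a: "a \<le> d * d - 1"
  shows "subgroup (graph_subgroup m a F) G"
  unfolding graph_subgroup_def
proof (rule subgroup_first_order_preimage)
  show "graph_mats d a F (int p ^ m) \<subseteq> carrier_mat d d"
    by (auto simp: graph_mats_def)
  show "0\<^sub>m d d \<in> graph_mats d a F (int p ^ m)"
    by (rule zero_mem_graph_mats)
  show "X + Y \<in> graph_mats d a F (int p ^ m)"
    if "X \<in> graph_mats d a F (int p ^ m)" "Y \<in> graph_mats d a F (int p ^ m)" for X Y
    using that a by (rule add_mem_graph_mats)
  show "Y \<in> graph_mats d a F (int p ^ m)"
    if "X \<in> graph_mats d a F (int p ^ m)" "Y \<in> carrier_mat d d"
      "red_mat (int p ^ m) X = red_mat (int p ^ m) Y" for X Y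
    using that a by (rule graph_mats_cong)
  show "Y \<in> graph_mats d a F (int p ^ m)"
    if "X \<in> graph_mats d a F (int p ^ m)" "X + Y \<in> graph_mats d a F (int p ^ m)"
      "Y \<in> carrier_mat d d" for X Y
    using that a by (rule graph_mats_cancel)
qed

lemma open_graph_subgroup:
  assumes a: "a \<le> d * d - 1"
  shows "open_subgroup_SL p d (graph_subgroup m a F)"
proof -
  have "cong_kernel (2 * m) \<subseteq> graph_subgroup m a F"
    unfolding graph_subgroup_def by (rule cong_kernel_subset_first_order_preimage[OF zero_mem_graph_mats])
  then show ?thesis
    using subgroup_graph_subgroup[OF a] unfolding open_subgroup_SL_iff by blast
qed

lemma mem_graph_subgroup_iff:
  assumes a: "a \<le> d * d - 1" and w: "w \<in> carrier G" "first_order m w (traceless_mat d v)"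
  shows "w \<in> graph_subgroup m a F \<longleftrightarrow>
    (\<forall>b \<in> {a..<d * d - 1}. int p ^ m dvd v b - (\<Sum>c<a. F (b, c) * v c))"
proof -
  have "w \<in> graph_subgroup m a F \<longleftrightarrow> traceless_mat d v \<in> graph_mats d a F (int p ^ m)"
  proof
    assume "w \<in> graph_subgroup m a F"
    then obtain X where X: "X \<in> graph_mats d a F (int p ^ m)" "first_order m w X"
      unfolding graph_subgroup_def first_order_preimage_def by blast
    show "traceless_mat d v \<in> graph_mats d a F (int p ^ m)"
      by (rule graph_mats_cong[OF X(1) traceless_mat_carrier first_order_level_cong[OF X(2) w(2) refl] a])
  next
    assume "traceless_mat d v \<in> graph_mats d a F (int p ^ m)"
    then show "w \<in> graph_subgroup m a F"
      using w unfolding graph_subgroup_def first_order_preimage_def by blast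
  qed
  then show ?thesis
    using traceless_mat_mem_graph_mats_iff[OF a] by simp
qed

lemma exists_first_order_traceless_mat: "\<exists>w \<in> carrier G. first_order m w (traceless_mat d v)"
  by (rule exists_first_order_traceless) (simp_all add: trace_traceless_mat)

text \<open>Elements with first-order part \<open>traceless_mat d v\<close>, where v is free on the first a
  coordinates and extended to the others by F, lie in the graph subgroup and are distinct at
  level \<open>2 m\<close>; so each coset meets at least \<open>p^(m a)\<close> matrices at that level, out of
  \<open>p^(2 m d\<^sup>2)\<close>.\<close>

lemma exists_graph_subgroup_family:
  assumes a: "a \<le> d * d - 1"
  obtains w where "\<And>v. w v \<in> graph_subgroup m a F"
    "inj_on (\<lambda>v. w v (2 * m)) (PiE {..<a} (\<lambda>_. {0..<int p ^ m}))"
proof -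
  let ?Q = "int p ^ m"
  define ext where "ext v c = (if c < a then v c else \<Sum>c'<a. F (c, c') * v c')" for v :: "nat \<Rightarrow> int" and c
  have "\<forall>v. \<exists>w. w \<in> carrier G \<and> first_order m w (traceless_mat d (ext v))"
    using exists_first_order_traceless_mat by blast
  from choice[OF this] obtain w where w: "\<And>v. w v \<in> carrier G \<and> first_order m (w v) (traceless_mat d (ext v))"
    by blast
  have "(\<Sum>c<a. F (b, c) * ext v c) = (\<Sum>c<a. F (b, c) * v c)" for v b
    by (rule sum.cong) (auto simp: ext_def)
  then have "ext v b - (\<Sum>c<a. F (b, c) * ext v c) = 0" if "a \<le> b" for v b
    using that by (simp add: ext_def)
  then have "w v \<in> graph_subgroup m a F" for v
    using mem_graph_subgroup_iff[OF a conjunct1[OF w[of v]] conjunct2[OF w[of v]]] by simp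
  moreover have "inj_on (\<lambda>v. w v (2 * m)) (PiE {..<a} (\<lambda>_. {0..<?Q}))"
  proof (rule inj_onI)
    fix v v' assume v: "v \<in> PiE {..<a} (\<lambda>_. {0..<?Q})" and v': "v' \<in> PiE {..<a} (\<lambda>_. {0..<?Q})"
      and eq: "w v (2 * m) = w v' (2 * m)"
    have cong: "red_mat ?Q (traceless_mat d (ext v)) = red_mat ?Q (traceless_mat d (ext v'))"
      using first_order_level_cong[OF conjunct2[OF w[of v]] conjunct2[OF w[of v']] eq] .
    show "v = v'"
    proof (rule PiE_ext[OF v v'])
      fix c assume c: "c \<in> {..<a}"
      then have "c < d * d - 1"
        using a by auto
      then have "ext v c mod ?Q = ext v' c mod ?Q"
        using row_major_cong[OF cong traceless_mat_carrier \<open>c < d * d - 1\<close>]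
        by (simp only: row_major_traceless_mat)
      then have "v c mod ?Q = v' c mod ?Q"
        using c by (simp add: ext_def)
      then show "v c = v' c"
        by (rule eq_of_mod_eq_in_range[OF _ PiE_mem[OF v c] PiE_mem[OF v' c]])
    qed
  qed
  ultimately show ?thesis
    using that by blast
qed

lemma card_rcosets_graph_subgroup:
  assumes a: "a \<le> d * d - 1"
  shows "finite (rcosets\<^bsub>G\<^esub> graph_subgroup m a F)
    \<and> card (rcosets\<^bsub>G\<^esub> graph_subgroup m a F) \<le> p ^ (m * (2 * d * d - a))"
proof -
  let ?H = "graph_subgroup m a F"
  obtain w where w: "\<And>v. w v \<in> ?H" "inj_on (\<lambda>v. w v (2 * m)) (PiE {..<a} (\<lambda>_. {0..<int p ^ m}))"
    using exists_graph_subgroup_family[OF a] by blast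
  have K: "cong_kernel (2 * m) \<subseteq> ?H"
    unfolding graph_subgroup_def by (rule cong_kernel_subset_first_order_preimage[OF zero_mem_graph_mats])
  have fin_card: "finite (rcosets\<^bsub>G\<^esub> ?H)
      \<and> card (rcosets\<^bsub>G\<^esub> ?H) * card (PiE {..<a} (\<lambda>_. {0..<int p ^ m})) \<le> p ^ (2 * m * (d * d))"
    by (rule card_rcosets_mult_le[OF subgroup_graph_subgroup[OF a] K w])
  have "card (PiE {..<a} (\<lambda>_. {0..<int p ^ m})) = p ^ (m * a)"
    by (simp add: card_PiE nat_power_eq power_mult)
  moreover have "2 * m * (d * d) = m * (2 * d * d - a) + m * a"
  proof -
    have "a \<le> 2 * d * d"
      using a by simp
    then have "m * (2 * d * d - a) + m * a = m * (2 * d * d)"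
      by (simp add: add_mult_distrib2[symmetric])
    then show ?thesis
      by (simp add: ac_simps)
  qed
  ultimately have "card (rcosets\<^bsub>G\<^esub> ?H) * p ^ (m * a) \<le> p ^ (m * (2 * d * d - a)) * p ^ (m * a)"
    using fin_card by (simp add: power_add)
  then have "card (rcosets\<^bsub>G\<^esub> ?H) \<le> p ^ (m * (2 * d * d - a))"
    by (rule mult_right_le_imp_le) (use p_ge_2 in simp)
  then show ?thesis
    using fin_card by blast
qed

lemma inj_on_graph_subgroup:
  assumes a: "a \<le> d * d - 1"
  shows "inj_on (graph_subgroup m a) (PiE ({a..<d * d - 1} \<times> {..<a}) (\<lambda>_. {0..<int p ^ m}))"
    (is "inj_on _ ?S")
proof (rule inj_onI)
  fix F F' assume F: "F \<in> ?S" and F': "F' \<in> ?S" and eq: "graph_subgroup m a F = graph_subgroup m a F'"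
  show "F = F'"
  proof (rule PiE_ext[OF F F'])
    fix z assume "z \<in> {a..<d * d - 1} \<times> {..<a}"
    then obtain b c where z: "z = (b, c)" and b: "b \<in> {a..<d * d - 1}" and c: "c < a"
      and z_mem: "(b, c) \<in> {a..<d * d - 1} \<times> {..<a}"
      by auto
    define v where "v i = (if i = c then 1 else if a \<le> i \<and> i < d * d - 1 then F (i, c) else 0)" for i
    have sum_v: "(\<Sum>c'<a. E (b', c') * v c') = E (b', c)" for E :: "nat \<times> nat \<Rightarrow> int" and b'
    proof -
      have "(\<Sum>c'<a. E (b', c') * v c') = (\<Sum>c'<a. if c' = c then E (b', c) else 0)"
        by (rule sum.cong) (auto simp: v_def)
      then show ?thesis
        using c by simp
    qed
    obtain w where w: "w \<in> carrier G" "first_order m w (traceless_mat d v)"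
      using exists_first_order_traceless_mat by blast
    have "w \<in> graph_subgroup m a F"
      unfolding mem_graph_subgroup_iff[OF a w] sum_v using c by (auto simp: v_def)
    then have "w \<in> graph_subgroup m a F'"
      unfolding eq .
    then have "int p ^ m dvd v b - F' (b, c)"
      unfolding mem_graph_subgroup_iff[OF a w] sum_v using b by blast
    moreover have "v b = F (b, c)"
      using b c by (auto simp: v_def)
    ultimately have "F (b, c) mod int p ^ m = F' (b, c) mod int p ^ m"
      by (simp add: mod_eq_dvd_iff)
    then show "F z = F' z"
      unfolding z by (rule eq_of_mod_eq_in_range[OF _ PiE_mem[OF F z_mem] PiE_mem[OF F' z_mem]])
  qed
qed

lemma num_open_subgroups_ge:
  assumes p: "prime p" and a: "a \<le> d * d - 1"
  shows "p ^ (m * ((d * d - 1 - a) * a)) \<le> num_open_subgroups p d (p ^ (m * (2 * d * d - a)))"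
proof -
  let ?S = "PiE ({a..<d * d - 1} \<times> {..<a}) (\<lambda>_. {0..<int p ^ m})"
  have "graph_subgroup m a ` ?S \<subseteq> open_subgroups_index_le (p ^ (m * (2 * d * d - a)))"
    using open_graph_subgroup[OF a] card_rcosets_graph_subgroup[OF a]
    by (auto simp: open_subgroups_index_le_def)
  then have "card (graph_subgroup m a ` ?S) \<le> num_open_subgroups p d (p ^ (m * (2 * d * d - a)))"
    unfolding num_open_subgroups_eq by (rule card_mono[OF finite_open_subgroups_index_le[OF p]])
  moreover have "card (graph_subgroup m a ` ?S) = p ^ (m * ((d * d - 1 - a) * a))"
    using card_image[OF inj_on_graph_subgroup[OF a]]
    by (simp add: card_PiE card_cartesian_product nat_power_eq power_mult)
  ultimately show ?thesis
    by simp
qed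

end

section \<open>The exponent\<close>

lemma sqrt_2_bounds: "5 / 4 \<le> sqrt 2" "6 / 5 < sqrt 2" "sqrt 2 < 2"
proof -
  show "5 / 4 \<le> sqrt 2"
    by (rule real_le_rsqrt) (simp add: power2_eq_square)
  show "6 / 5 < sqrt 2"
    by (rule real_less_rsqrt) (simp add: power2_eq_square)
  have "sqrt 2 < sqrt (2 ^ 2)"
    by (subst real_sqrt_less_iff) simp
  then show "sqrt 2 < 2"
    by simp
qed

text \<open>Writing \<open>a = (2 - \<surd>2) x - t\<close> with \<open>0 \<le> t < 1\<close>, the right-hand side minus the left-hand side
  is \<open>(5\<surd>2 - 6) x + t (1 - t + 2 (2 - \<surd>2))\<close>, which is nonnegative.\<close>

lemma exponent_inequality:
  fixes x a :: real
  assumes x: "0 \<le> x" and a1: "a \<le> (2 - sqrt 2) * x" and a2: "(2 - sqrt 2) * x - 1 < a"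
  shows "(2 * x - a) * ((3 - 2 * sqrt 2) * x - 2 * (2 - sqrt 2)) \<le> (x - 1 - a) * a"
proof -
  define s where "s = sqrt 2"
  define t where "t = (2 - s) * x - a"
  have t: "0 \<le> t" "t < 1"
    using a1 a2 by (auto simp: t_def s_def)
  have "(x - 1 - a) * a - (2 * x - a) * ((3 - 2 * s) * x - 2 * (2 - s))
      - ((5 * s - 6) * x + t * (1 - t + 2 * (2 - s))) = (s * s - 2) * (x * x - 2 * x)"
    by (simp add: t_def algebra_simps)
  then have "(x - 1 - a) * a - (2 * x - a) * ((3 - 2 * s) * x - 2 * (2 - s))
      = (5 * s - 6) * x + t * (1 - t + 2 * (2 - s))"
    by (simp add: s_def)
  moreover have "0 \<le> (5 * s - 6) * x" "0 \<le> t * (1 - t + 2 * (2 - s))"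
    using x sqrt_2_bounds t by (simp_all add: s_def)
  ultimately show ?thesis
    unfolding s_def by linarith
qed

lemma exists_exponent:
  fixes d :: nat
  assumes d: "2 \<le> d"
  obtains a where "a \<le> d * d - 1"
    "real (2 * d * d - a) * ((3 - 2 * sqrt 2) * real d ^ 2 - 2 * (2 - sqrt 2))
       \<le> real ((d * d - 1 - a) * a)"
proof -
  define x where "x = real (d * d)"
  define a where "a = nat \<lfloor>(2 - sqrt 2) * x\<rfloor>"
  have dd: "2 * 2 \<le> d * d"
    using mult_mono[OF d d] by simp
  then have "real (2 * 2) \<le> real (d * d)"
    by (simp only: of_nat_le_iff)
  then have x4: "4 \<le> x"
    by (simp add: x_def)
  then have a1: "real a \<le> (2 - sqrt 2) * x" and a2: "(2 - sqrt 2) * x - 1 < real a"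
    using sqrt_2_bounds by (simp_all add: a_def)
  have "(sqrt 2 - 1) * 4 \<le> (sqrt 2 - 1) * x"
    using x4 sqrt_2_bounds by (intro mult_left_mono) auto
  then have "real a \<le> x - 1"
    using a1 sqrt_2_bounds by (simp add: algebra_simps)
  moreover have dd1: "1 \<le> d * d"
    using dd by linarith
  then have "real (d * d - 1) = x - 1"
    by (simp add: x_def of_nat_diff)
  ultimately have "real a \<le> real (d * d - 1)"
    by linarith
  then have a_le: "a \<le> d * d - 1"
    by (simp only: of_nat_le_iff)
  have "real (2 * d * d - a) = 2 * x - real a"
    using a_le by (simp add: x_def of_nat_diff)
  moreover have "Suc a \<le> d * d"
    using a_le dd1 by linarith
  then have "real (d * d - 1 - a) = x - 1 - real a"
    by (simp add: x_def of_nat_diff)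
  ultimately have "real (2 * d * d - a) * ((3 - 2 * sqrt 2) * real d ^ 2 - 2 * (2 - sqrt 2))
      \<le> real ((d * d - 1 - a) * a)"
    using exponent_inequality[OF _ a1 a2] x4 by (simp add: x_def power2_eq_square)
  then show ?thesis
    using that a_le by blast
qed

lemma infinite_powers_bound:
  fixes f :: "nat \<Rightarrow> nat" and b k j :: nat and c :: real
  assumes b: "2 \<le> b" and k: "0 < k" and jk: "real k * c \<le> real j"
    and f: "\<And>m. b ^ (m * j) \<le> f (b ^ (m * k))"
  shows "infinite {n. n > 0 \<and> real (f n) \<ge> real n powr c}"
proof -
  have "b ^ (m * k) \<in> {n. n > 0 \<and> real (f n) \<ge> real n powr c}" for m
  proof -
    have "real (b ^ (m * k)) powr c = real b powr (real m * (real k * c))"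
      using b by (simp add: powr_powr powr_realpow[symmetric] mult.assoc)
    also have "\<dots> \<le> real b powr (real (m * j))"
      using b jk by (intro powr_mono) (auto intro: mult_left_mono)
    also have "\<dots> = real (b ^ (m * j))"
      by (subst powr_realpow) (use b in auto)
    also have "\<dots> \<le> real (f (b ^ (m * k)))"
      using f[of m] by linarith
    finally show ?thesis
      using b by simp
  qed
  moreover have "inj (\<lambda>m. b ^ (m * k))"
    using b k by (auto intro!: injI simp: power_inject_exp)
  ultimately show ?thesis
    using infinite_super[of "range (\<lambda>m. b ^ (m * k))"] finite_imageD[of "\<lambda>m. b ^ (m * k)" UNIV]
    by blast
qed

theorem proposition6p5:
  fixes p d :: nat
  assumes "prime p" and "odd p" and "d \<ge> 2"
  shows "infinite {n::nat. n > 0 \<and>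
           real (num_open_subgroups p d n)
             \<ge> real n powr ((3 - 2 * sqrt 2) * real d ^ 2 - 2 * (2 - sqrt 2))}"
proof -
  interpret SL_Zp_group p d
    using prime_ge_2_nat[OF assms(1)] by unfold_locales
  obtain a where a: "a \<le> d * d - 1"
    "real (2 * d * d - a) * ((3 - 2 * sqrt 2) * real d ^ 2 - 2 * (2 - sqrt 2))
       \<le> real ((d * d - 1 - a) * a)"
    using exists_exponent[OF assms(3)] by blast
  show ?thesis
  proof (rule infinite_powers_bound[OF p_ge_2 _ a(2)])
    have "2 * 2 \<le> d * d"
      using mult_mono[OF assms(3) assms(3)] by simp
    then show "0 < 2 * d * d - a"
      unfolding mult.assoc using a(1) by linarith
    show "p ^ (m * ((d * d - 1 - a) * a)) \<le> num_open_subgroups p d (p ^ (m * (2 * d * d - a)))" for m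
      by (rule num_open_subgroups_ge[OF assms(1) a(1)])
  qed
qed

end
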